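(* Consider the setting described in the context. The following statements are equivalent. (i) There exists a linear feedback equilibrium strategy of Problem (LQ). (ii) There exists $\Phi=\{\Phi_0,\dots,\Phi_{N-1}\}$ with $\Phi_t\in\mathbb{R}^{m\times n}$ such that for any initial pair $(t,x)\in\mathbb{T}\times\mathbb{R}^n$ and any $k\in\mathbb{T}_t$, the forward-backward stochastic difference equation $$\begin{cases}X^{k,\Phi}_{\ell+1}=(A_{k,\ell}+B_{k,\ell}\Phi_\ell)X^{k,\Phi}_\ell+(C_{k,\ell}+D_{k,\ell}\Phi_\ell)X^{k,\Phi}_\ell w_\ell,\\ Z^{k,\Phi}_\ell=(A_{k,\ell}+B_{k,\ell}\Phi_\ell)^T\mathbb{E}(Z^{k,\Phi}_{\ell+1}\mid\mathcal{F}_{\ell-1})+(C_{k,\ell}+D_{k,\ell}\Phi_\ell)^T\mathbb{E}(Z^{k,\Phi}_{\ell+1}w_\ell\mid\mathcal{F}_{\ell-1})+(\Phi_\ell^TR_{k,\ell}\Phi_\ell+Q_{k,\ell})X^{k,\Phi}_\ell,\\ X^{k,\Phi}_k=X^{t,x,*}_k,\quad Z^{k,\Phi}_N=G_kX^{k,\Phi}_N,\quad \ell\in\mathbb{T}_k\end{cases}$$ has a solution $(X^{k,\Phi},Z^{k,\Phi})$ satisfying the stationary condition $$0=R_{k,k}\Phi_kX^{k,\Phi}_k+B_{k,k}^T\mathbb{E}(Z^{k,\Phi}_{k+1}\mid\mathcal{F}_{k-1})+D_{k,k}^T\mathbb{E}(Z^{k,\Phi}_{k+1}w_k\mid\mathcal{F}_{k-1}),$$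 and the convexity condition $$\inf_{\bar u_k\in L^2_{\mathcal{F}}(k;\mathbb{R}^m)}\Big\{\mathbb{E}[\bar u_k^TR_{k,k}\bar u_k]+\sum_{\ell=k}^{N-1}\mathbb{E}\big[(Y^{k,\bar u_k,\Phi}_\ell)^T(Q_{k,\ell}+\Phi_\ell^TR_{k,\ell}\Phi_\ell)Y^{k,\bar u_k,\Phi}_\ell\big]+\mathbb{E}\big[(Y^{k,\bar u_k,\Phi}_N)^TG_kY^{k,\bar u_k,\Phi}_N\big]\Big\}\ge0$$ holds. Here $X^{t,x,*}_{k+1}=(A_{k,k}+B_{k,k}\Phi_k)X^{t,x,*}_k+(C_{k,k}+D_{k,k}\Phi_k)X^{t,x,*}_kw_k$, $X^{t,x,*}_t=x$, and $Y^{k,\bar u_k,\Phi}$ is given by $Y^{k,\bar u_k,\Phi}_k=0$, $Y^{k,\bar u_k,\Phi}_{k+1}=B_{k,k}\bar u_k+D_{k,k}\bar u_kw_k$, and $Y^{k,\bar u_k,\Phi}_{\ell+1}=(A_{k,\ell}+B_{k,\ell}\Phi_\ell)Y^{k,\bar u_k,\Phi}_\ell+(C_{k,\ell}+D_{k,\ell}\Phi_\ell)Y^{k,\bar u_k,\Phi}_\ell w_\ell$ for $\ell\in\mathbb{T}_{k+1}$.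
   Context: Let $N$ be a positive integer, $\mathbb{T}=\{0,1,\dots,N-1\}$, $\mathbb{T}_t=\{t,\dots,N-1\}$. On a probability space $(\Omega,\mathcal{F},P)$, $\{w_k\}$ is a scalar martingale difference sequence with $\mathbb{E}[w_{k+1}\mid\mathcal{F}_k]=0$ and $\mathbb{E}[w_{k+1}^2\mid\mathcal{F}_k]=1$ for $k\ge0$, where $\mathcal{F}_k=\sigma\{x_0,w_l,\ l=0,\dots,k\}$ and $\mathcal{F}_{-1}=\{\emptyset,\Omega\}$. $L^2_{\mathcal{F}}(\mathbb{T}_t;\mathbb{R}^m)$ is the set of $\mathbb{R}^m$-valued processes $\{\nu_k,k\in\mathbb{T}_t\}$ with each $\nu_k$ $\mathcal{F}_{k-1}$-measurable and $\sum_k\mathbb{E}|\nu_k|^2<\infty$; $L^2_{\mathcal{F}}(k;\mathcal{H})$ is the set of square-integrable $\mathcal{F}_{k-1}$-measurable $\mathcal{H}$-valued random variables. For each $t\in\mathbb{T}$, $k\in\mathbb{T}_t$, let $A_{t,k},C_{t,k}\in\mathbb{R}^{n\times n}$, $B_{t,k},D_{t,k}\in\mathbb{R}^{n\times m}$ be deterministic and $Q_{t,k}\in\mathbb{R}^{n\times n}$, $R_{t,k}\in\mathbb{R}^{m\times m}$, $G_t\in\mathbb{R}^{n\times n}$ deterministic symmetric (no definiteness assumed). For $t\in\mathbb{T}$, $y\in L^2_{\mathcal{F}}(t;\mathbb{R}^n)$, $u\in L^2_{\mathcal{F}}(\mathbb{T}_t;\mathbb{R}^m)$, the state $X^t$ solves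 $X^t_{k+1}=A_{t,k}X^t_k+B_{t,k}u_k+(C_{t,k}X^t_k+D_{t,k}u_k)w_k$, $X^t_t=y$, and $J(t,y;u)=\sum_{k=t}^{N-1}\mathbb{E}[(X^t_k)^TQ_{t,k}X^t_k+u_k^TR_{t,k}u_k]+\mathbb{E}[(X^t_N)^TG_tX^t_N]$ (Problem (LQ) is to minimize it). $\Phi=\{\Phi_0,\dots,\Phi_{N-1}\}$, $\Phi_t\in\mathbb{R}^{m\times n}$, is a linear feedback equilibrium strategy of Problem (LQ) if for every $(t,x)\in\mathbb{T}\times\mathbb{R}^n$, $k\in\mathbb{T}_t$ and $u_k\in L^2_{\mathcal{F}}(k;\mathbb{R}^m)$, $$J\big(k,X^{t,x,*}_k;(\Phi_\ell X^{k,\Phi}_\ell)_{\ell\in\mathbb{T}_k}\big)\le J\big(k,X^{t,x,*}_k;(u_k,(\Phi_\ell X^{k,u_k,\Phi}_\ell)_{\ell\in\mathbb{T}_{k+1}})\big),$$ where $X^{t,x,*}_{k+1}=(A_{k,k}+B_{k,k}\Phi_k)X^{t,x,*}_k+(C_{k,k}+D_{k,k}\Phi_k)X^{t,x,*}_kw_k$, $X^{t,x,*}_t=x$; $X^{k,\Phi}_{\ell+1}=(A_{k,\ell}+B_{k,\ell}\Phi_\ell)X^{k,\Phi}_\ell+(C_{k,\ell}+D_{k,\ell}\Phi_\ell)X^{k,\Phi}_\ell w_\ell$ ($\ell\in\mathbb{T}_k$), $X^{k,\Phi}_k=X^{t,x,*}_k$; and $X^{k,u_k,\Phi}_k=X^{t,x,*}_k$,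 $X^{k,u_k,\Phi}_{k+1}=A_{k,k}X^{k,u_k,\Phi}_k+B_{k,k}u_k+(C_{k,k}X^{k,u_k,\Phi}_k+D_{k,k}u_k)w_k$, $X^{k,u_k,\Phi}_{\ell+1}=(A_{k,\ell}+B_{k,\ell}\Phi_\ell)X^{k,u_k,\Phi}_\ell+(C_{k,\ell}+D_{k,\ell}\Phi_\ell)X^{k,u_k,\Phi}_\ell w_\ell$ for $\ell\in\mathbb{T}_{k+1}$. *)

theory Defs
  imports "HOL-Probability.Probability"
begin

(* Conventions:
   - time indices are natural numbers; T = {0..<N}, T_t = {t..<N}.
   - Fp M x0 w k is the sigma-algebra F_(k-1) of the paper:
       Fp .. 0 = {{}, Omega} (= F_(-1)),  Fp .. (Suc j) = sigma{x0, w_0, ..., w_j} (= F_j).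
   - n x n matrices: real^'n^'n, n x m matrices: real^'m^'n, m x n matrices: real^'n^'m.
   - E[.] is the Bochner integral w.r.t. M; conditional expectations are real_cond_exp
     applied componentwise. *)

definition Fp :: "'w measure \<Rightarrow> ('w \<Rightarrow> real^'n) \<Rightarrow> (nat \<Rightarrow> 'w \<Rightarrow> real) \<Rightarrow> nat \<Rightarrow> 'w measure" where
  "Fp M x0 w k = sigma (space M)
     ((if k = 0 then {} else {x0 -` B \<inter> space M | B. B \<in> sets borel})
      \<union> (\<Union>l<k. {w l -` B \<inter> space M | B. B \<in> sets borel}))"

definition L2F :: "'w measure \<Rightarrow> ('w \<Rightarrow> real^'n) \<Rightarrow> (nat \<Rightarrow> 'w \<Rightarrow> real) \<Rightarrow> nat \<Rightarrow> ('w \<Rightarrow> real^'m) \<Rightarrow> bool" where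
  "L2F M x0 w k v \<longleftrightarrow> v \<in> borel_measurable (Fp M x0 w k) \<and> integrable M (\<lambda>\<omega>. (norm (v \<omega>))\<^sup>2)"

definition vcond_exp :: "'w measure \<Rightarrow> 'w measure \<Rightarrow> ('w \<Rightarrow> real^'n) \<Rightarrow> 'w \<Rightarrow> real^'n" where
  "vcond_exp M F Z = (\<lambda>\<omega>. \<chi> i. real_cond_exp M F (\<lambda>\<eta>. Z \<eta> $ i) \<omega>)"

definition qf :: "real^'a^'a \<Rightarrow> real^'a \<Rightarrow> real" where
  "qf P x = x \<bullet> (P *v x)"

primrec ol_state :: "(nat \<Rightarrow> nat \<Rightarrow> real^'n^'n) \<Rightarrow> (nat \<Rightarrow> nat \<Rightarrow> real^'m^'n) \<Rightarrow>
    (nat \<Rightarrow> nat \<Rightarrow> real^'n^'n) \<Rightarrow> (nat \<Rightarrow> nat \<Rightarrow> real^'m^'n) \<Rightarrow> (nat \<Rightarrow> 'w \<Rightarrow> real) \<Rightarrow>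
    nat \<Rightarrow> ('w \<Rightarrow> real^'n) \<Rightarrow> (nat \<Rightarrow> 'w \<Rightarrow> real^'m) \<Rightarrow> nat \<Rightarrow> 'w \<Rightarrow> real^'n" where
  "ol_state A B C D w t y u 0 = y"
| "ol_state A B C D w t y u (Suc j) = (\<lambda>\<omega>. if j < t then y \<omega> else
      A t j *v ol_state A B C D w t y u j \<omega> + B t j *v u j \<omega>
      + w j \<omega> *\<^sub>R (C t j *v ol_state A B C D w t y u j \<omega> + D t j *v u j \<omega>))"

definition lq_cost :: "'w measure \<Rightarrow> nat \<Rightarrow> (nat \<Rightarrow> nat \<Rightarrow> real^'n^'n) \<Rightarrow> (nat \<Rightarrow> nat \<Rightarrow> real^'m^'n) \<Rightarrow>
    (nat \<Rightarrow> nat \<Rightarrow> real^'n^'n) \<Rightarrow> (nat \<Rightarrow> nat \<Rightarrow> real^'m^'n) \<Rightarrow>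
    (nat \<Rightarrow> nat \<Rightarrow> real^'n^'n) \<Rightarrow> (nat \<Rightarrow> nat \<Rightarrow> real^'m^'m) \<Rightarrow> (nat \<Rightarrow> real^'n^'n) \<Rightarrow>
    (nat \<Rightarrow> 'w \<Rightarrow> real) \<Rightarrow> nat \<Rightarrow> ('w \<Rightarrow> real^'n) \<Rightarrow> (nat \<Rightarrow> 'w \<Rightarrow> real^'m) \<Rightarrow> real" where
  "lq_cost M N A B C D Q R G w t y u =
     (\<Sum>k=t..<N. \<integral>\<omega>. qf (Q t k) (ol_state A B C D w t y u k \<omega>) + qf (R t k) (u k \<omega>) \<partial>M)
     + (\<integral>\<omega>. qf (G t) (ol_state A B C D w t y u N \<omega>) \<partial>M)"

primrec eq_state :: "(nat \<Rightarrow> nat \<Rightarrow> real^'n^'n) \<Rightarrow> (nat \<Rightarrow> nat \<Rightarrow> real^'m^'n) \<Rightarrow>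
    (nat \<Rightarrow> nat \<Rightarrow> real^'n^'n) \<Rightarrow> (nat \<Rightarrow> nat \<Rightarrow> real^'m^'n) \<Rightarrow> (nat \<Rightarrow> 'w \<Rightarrow> real) \<Rightarrow>
    (nat \<Rightarrow> real^'n^'m) \<Rightarrow> nat \<Rightarrow> real^'n \<Rightarrow> nat \<Rightarrow> 'w \<Rightarrow> real^'n" where
  "eq_state A B C D w \<Phi> t x 0 = (\<lambda>\<omega>. x)"
| "eq_state A B C D w \<Phi> t x (Suc j) = (\<lambda>\<omega>. if j < t then x else
      (A j j + B j j ** \<Phi> j) *v eq_state A B C D w \<Phi> t x j \<omega>
      + w j \<omega> *\<^sub>R ((C j j + D j j ** \<Phi> j) *v eq_state A B C D w \<Phi> t x j \<omega>))"

text \<open>With v = Phi_k y this is X^{k,Phi};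
  with general v it is X^{k,v,Phi}; with y = 0 and v = u-bar it is Y^{k,u-bar,Phi}.\<close>
primrec cl_state :: "(nat \<Rightarrow> nat \<Rightarrow> real^'n^'n) \<Rightarrow> (nat \<Rightarrow> nat \<Rightarrow> real^'m^'n) \<Rightarrow>
    (nat \<Rightarrow> nat \<Rightarrow> real^'n^'n) \<Rightarrow> (nat \<Rightarrow> nat \<Rightarrow> real^'m^'n) \<Rightarrow> (nat \<Rightarrow> 'w \<Rightarrow> real) \<Rightarrow>
    (nat \<Rightarrow> real^'n^'m) \<Rightarrow> nat \<Rightarrow> ('w \<Rightarrow> real^'n) \<Rightarrow> ('w \<Rightarrow> real^'m) \<Rightarrow> nat \<Rightarrow> 'w \<Rightarrow> real^'n" where
  "cl_state A B C D w \<Phi> k y v 0 = y"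
| "cl_state A B C D w \<Phi> k y v (Suc j) = (\<lambda>\<omega>. if j < k then y \<omega>
      else if j = k then A k k *v y \<omega> + B k k *v v \<omega> + w k \<omega> *\<^sub>R (C k k *v y \<omega> + D k k *v v \<omega>)
      else (A k j + B k j ** \<Phi> j) *v cl_state A B C D w \<Phi> k y v j \<omega>
        + w j \<omega> *\<^sub>R ((C k j + D k j ** \<Phi> j) *v cl_state A B C D w \<Phi> k y v j \<omega>))"

definition fb_control :: "(nat \<Rightarrow> real^'n^'m) \<Rightarrow> nat \<Rightarrow> ('w \<Rightarrow> real^'m) \<Rightarrow> (nat \<Rightarrow> 'w \<Rightarrow> real^'n) \<Rightarrow> nat \<Rightarrow> 'w \<Rightarrow> real^'m" where
  "fb_control \<Phi> k v X l = (if l = k then v else (\<lambda>\<omega>. \<Phi> l *v X l \<omega>))"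

definition is_lfes :: "'w measure \<Rightarrow> ('w \<Rightarrow> real^'n) \<Rightarrow> (nat \<Rightarrow> 'w \<Rightarrow> real) \<Rightarrow> nat \<Rightarrow>
    (nat \<Rightarrow> nat \<Rightarrow> real^'n^'n) \<Rightarrow> (nat \<Rightarrow> nat \<Rightarrow> real^'m^'n) \<Rightarrow>
    (nat \<Rightarrow> nat \<Rightarrow> real^'n^'n) \<Rightarrow> (nat \<Rightarrow> nat \<Rightarrow> real^'m^'n) \<Rightarrow>
    (nat \<Rightarrow> nat \<Rightarrow> real^'n^'n) \<Rightarrow> (nat \<Rightarrow> nat \<Rightarrow> real^'m^'m) \<Rightarrow> (nat \<Rightarrow> real^'n^'n) \<Rightarrow>
    (nat \<Rightarrow> real^'n^'m) \<Rightarrow> bool" where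
  "is_lfes M x0 w N A B C D Q R G \<Phi> \<longleftrightarrow>
    (\<forall>t<N. \<forall>x. \<forall>k\<in>{t..<N}. \<forall>v. L2F M x0 w k v \<longrightarrow>
      (let Xs = eq_state A B C D w \<Phi> t x k;
           v0 = (\<lambda>\<omega>. \<Phi> k *v Xs \<omega>)
       in lq_cost M N A B C D Q R G w k Xs (fb_control \<Phi> k v0 (cl_state A B C D w \<Phi> k Xs v0))
          \<le> lq_cost M N A B C D Q R G w k Xs (fb_control \<Phi> k v (cl_state A B C D w \<Phi> k Xs v))))"

definition fbsde_sol :: "'w measure \<Rightarrow> ('w \<Rightarrow> real^'n) \<Rightarrow> (nat \<Rightarrow> 'w \<Rightarrow> real) \<Rightarrow> nat \<Rightarrow>
    (nat \<Rightarrow> nat \<Rightarrow> real^'n^'n) \<Rightarrow> (nat \<Rightarrow> nat \<Rightarrow> real^'m^'n) \<Rightarrow>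
    (nat \<Rightarrow> nat \<Rightarrow> real^'n^'n) \<Rightarrow> (nat \<Rightarrow> nat \<Rightarrow> real^'m^'n) \<Rightarrow>
    (nat \<Rightarrow> nat \<Rightarrow> real^'n^'n) \<Rightarrow> (nat \<Rightarrow> nat \<Rightarrow> real^'m^'m) \<Rightarrow> (nat \<Rightarrow> real^'n^'n) \<Rightarrow>
    (nat \<Rightarrow> real^'n^'m) \<Rightarrow> nat \<Rightarrow> ('w \<Rightarrow> real^'n) \<Rightarrow> (nat \<Rightarrow> 'w \<Rightarrow> real^'n) \<Rightarrow> (nat \<Rightarrow> 'w \<Rightarrow> real^'n) \<Rightarrow> bool" where
  "fbsde_sol M x0 w N A B C D Q R G \<Phi> k Xs X Z \<longleftrightarrow>
    (\<forall>l\<in>{k..N}. X l \<in> borel_measurable M \<and> Z l \<in> borel_measurable M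
        \<and> integrable M (\<lambda>\<omega>. (norm (X l \<omega>))\<^sup>2) \<and> integrable M (\<lambda>\<omega>. (norm (Z l \<omega>))\<^sup>2))
    \<and> (AE \<omega> in M. X k \<omega> = Xs \<omega>)
    \<and> (\<forall>l\<in>{k..<N}. AE \<omega> in M. X (Suc l) \<omega> =
          (A k l + B k l ** \<Phi> l) *v X l \<omega> + w l \<omega> *\<^sub>R ((C k l + D k l ** \<Phi> l) *v X l \<omega>))
    \<and> (\<forall>l\<in>{k..<N}. AE \<omega> in M. Z l \<omega> =
          transpose (A k l + B k l ** \<Phi> l) *v vcond_exp M (Fp M x0 w l) (Z (Suc l)) \<omega>
          + transpose (C k l + D k l ** \<Phi> l) *v vcond_exp M (Fp M x0 w l) (\<lambda>\<eta>. w l \<eta> *\<^sub>R Z (Suc l) \<eta>) \<omega>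
          + (transpose (\<Phi> l) ** R k l ** \<Phi> l + Q k l) *v X l \<omega>)
    \<and> (AE \<omega> in M. Z N \<omega> = G k *v X N \<omega>)"

definition cond_ii :: "'w measure \<Rightarrow> ('w \<Rightarrow> real^'n) \<Rightarrow> (nat \<Rightarrow> 'w \<Rightarrow> real) \<Rightarrow> nat \<Rightarrow>
    (nat \<Rightarrow> nat \<Rightarrow> real^'n^'n) \<Rightarrow> (nat \<Rightarrow> nat \<Rightarrow> real^'m^'n) \<Rightarrow>
    (nat \<Rightarrow> nat \<Rightarrow> real^'n^'n) \<Rightarrow> (nat \<Rightarrow> nat \<Rightarrow> real^'m^'n) \<Rightarrow>
    (nat \<Rightarrow> nat \<Rightarrow> real^'n^'n) \<Rightarrow> (nat \<Rightarrow> nat \<Rightarrow> real^'m^'m) \<Rightarrow> (nat \<Rightarrow> real^'n^'n) \<Rightarrow>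
    (nat \<Rightarrow> real^'n^'m) \<Rightarrow> bool" where
  "cond_ii M x0 w N A B C D Q R G \<Phi> \<longleftrightarrow>
    (\<forall>t<N. \<forall>x. \<forall>k\<in>{t..<N}.
      (\<exists>X Z. fbsde_sol M x0 w N A B C D Q R G \<Phi> k (eq_state A B C D w \<Phi> t x k) X Z
         \<and> (AE \<omega> in M. 0 = R k k *v (\<Phi> k *v X k \<omega>)
              + transpose (B k k) *v vcond_exp M (Fp M x0 w k) (Z (Suc k)) \<omega>
              + transpose (D k k) *v vcond_exp M (Fp M x0 w k) (\<lambda>\<eta>. w k \<eta> *\<^sub>R Z (Suc k) \<eta>) \<omega>))
      \<and> (INF ub \<in> {u. L2F M x0 w k u}.
           ereal ((\<integral>\<omega>. qf (R k k) (ub \<omega>) \<partial>M)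
             + (\<Sum>l=k..<N. \<integral>\<omega>. qf (Q k l + transpose (\<Phi> l) ** R k l ** \<Phi> l)
                                   (cl_state A B C D w \<Phi> k (\<lambda>\<omega>. 0) ub l \<omega>) \<partial>M)
             + (\<integral>\<omega>. qf (G k) (cl_state A B C D w \<Phi> k (\<lambda>\<omega>. 0) ub N \<omega>) \<partial>M))) \<ge> 0)"

end

theory Submission
  imports Defs
begin

(*
  Fix k and the equilibrium state y = X^{t,x,*}_k, and write a time-k control as Phi_k y + u.
  The closed-loop state is linear in (y, control), so the cost splits as
    J(Phi_k y + u) = J(Phi_k y) + 2 C(u) + Q(u),
  where Q is the convexity functional of (ii).  Pairing a solution Z of the backward equation
  with the perturbed state Y^{k,u,Phi} and telescoping, using E[w_l | F_(l-1)] = 0 and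
  E[w_l^2 | F_(l-1)] = 1, identifies C(u) with E[u . S], S the stationarity expression.
  So (ii) gives C = 0 and Q >= 0, i.e. equilibrium.  Conversely, Z_l = P_l X_l with P solving
  a backward Lyapunov recursion always solves the backward equation, and then S = K y for an
  explicit matrix K; testing the equilibrium inequality with u = -s K y for small s > 0 forces
  K y = 0 almost surely, whence C = 0 and Q >= 0.
*)

lemma borel_measurable_vec_nth:
  "f \<in> borel_measurable F \<Longrightarrow> (\<lambda>x. (f x :: real^'n) $ i) \<in> borel_measurable F"
  by (rule measurable_compose[OF _ borel_measurable_nth])

lemma borel_measurable_vec_iff:
  "f \<in> borel_measurable F \<longleftrightarrow> (\<forall>i. (\<lambda>x. (f x :: real^'n) $ i) \<in> borel_measurable F)"
proof
  show "f \<in> borel_measurable F \<Longrightarrow> \<forall>i. (\<lambda>x. f x $ i) \<in> borel_measurable F"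
    by (auto intro: borel_measurable_vec_nth)
  show "\<forall>i. (\<lambda>x. f x $ i) \<in> borel_measurable F \<Longrightarrow> f \<in> borel_measurable F"
    unfolding borel_measurable_euclidean_space[where f=f] by (auto simp: Basis_vec_def inner_axis)
qed

lemma borel_measurable_matrix_vector_mult[measurable]:
  "(\<lambda>x. (P :: real^'a^'b) *v x) \<in> borel_measurable borel"
  by (rule borel_measurable_continuous_onI)
     (auto intro: linear_continuous_on simp: linear_conv_bounded_linear[symmetric])

lemma nonneg_eq_0_if_linear_le_quadratic:
  fixes E q :: real
  assumes "0 \<le> E" and le: "\<And>t. 0 < t \<Longrightarrow> 2 * t * E \<le> t\<^sup>2 * q"
  shows "E = 0"
proof (rule ccontr)
  assume "E \<noteq> 0"
  with \<open>0 \<le> E\<close> have "0 < E" by simp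
  define t where "t = E / (\<bar>q\<bar> + 1)"
  have "0 < t" unfolding t_def using \<open>0 < E\<close> by simp
  have "t * (2 * E) \<le> t * (t * \<bar>q\<bar>)"
    using le[OF \<open>0 < t\<close>] mult_left_mono[OF abs_ge_self[of q], of "t\<^sup>2"]
    by (simp add: power2_eq_square algebra_simps)
  then have "2 * E \<le> t * \<bar>q\<bar>" using \<open>0 < t\<close> by (rule mult_left_le_imp_le)
  moreover have "t * \<bar>q\<bar> < E"
    using \<open>0 < E\<close> unfolding t_def by (simp add: field_simps)
  ultimately show False using \<open>0 < E\<close> by simp
qed

lemma INF_ereal_nonneg_iff: "(INF u \<in> {u. P u}. ereal (f u)) \<ge> 0 \<longleftrightarrow> (\<forall>u. P u \<longrightarrow> 0 \<le> f u)"
  by (simp add: le_INF_iff)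

lemma integral_inner_eq_0_if_AE_0:
  fixes u S :: "'a \<Rightarrow> 'b :: euclidean_space"
  assumes "u \<in> borel_measurable M" "S \<in> borel_measurable M" "AE x in M. S x = 0"
  shows "(\<integral>x. u x \<bullet> S x \<partial>M) = 0"
proof -
  have "(\<integral>x. u x \<bullet> S x \<partial>M) = (\<integral>x. 0 \<partial>M)"
    by (rule integral_cong_AE) (use assms in auto)
  then show ?thesis by simp
qed

lemma inner_matrix_vector_mult: "(x :: real^'b) \<bullet> ((P :: real^'a^'b) *v y) = (transpose P *v x) \<bullet> y"
  by (simp add: dot_lmul_matrix)

lemma matrix_vector_mult_add_mult: "(P + S ** T) *v x = P *v x + S *v (T *v x)"
  by (simp add: matrix_vector_mult_add_rdistrib matrix_vector_mul_assoc)

lemma qf_add_matrix: "qf (P + S) x = qf P x + qf S x"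
  unfolding qf_def by (simp add: matrix_vector_mult_add_rdistrib inner_add_right)

lemma qf_zero[simp]: "qf P 0 = 0"
  unfolding qf_def by simp

lemma qf_scaleR: "qf P (c *\<^sub>R x) = c\<^sup>2 * qf P x"
  unfolding qf_def by (simp add: matrix_vector_mult_scaleR power2_eq_square)

lemma qf_add:
  assumes "transpose P = P"
  shows "qf P (a + b) = qf P a + 2 * ((P *v a) \<bullet> b) + qf P b"
proof -
  have "a \<bullet> (P *v b) = (P *v a) \<bullet> b" using inner_matrix_vector_mult[of a P b] assms by simp
  moreover have "b \<bullet> (P *v a) = (P *v a) \<bullet> b" by (simp add: inner_commute)
  ultimately show ?thesis unfolding qf_def
    by (simp add: matrix_vector_right_distrib inner_add_left inner_add_right)
qed

lemma inner_mult_matrix_vector_mult: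
  fixes S :: "real^'b^'b" and K :: "real^'a^'b"
  shows   "(S *v (K *v a)) \<bullet> (K *v b) = ((transpose K ** S ** K) *v a) \<bullet> b"
  using inner_matrix_vector_mult[of "S *v (K *v a)" K b]
  by (simp add: inner_commute matrix_vector_mul_assoc matrix_mul_assoc)

lemma qf_matrix_vector_mult:
  fixes S :: "real^'b^'b" and K :: "real^'a^'b"
  shows "qf S (K *v a) = qf (transpose K ** S ** K) a"
  unfolding qf_def using inner_mult_matrix_vector_mult[of S K a a]
  by (simp add: inner_commute)

lemma qf_add_feedback:
  assumes "transpose Q = Q" "transpose R = R"
  shows "qf Q (a + b) + qf R (K *v (a + b)) =
    (qf Q a + qf R (K *v a)) + 2 * (((Q + transpose K ** R ** K) *v a) \<bullet> b)
     + qf (Q + transpose K ** R ** K) b"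
  unfolding matrix_vector_right_distrib qf_add[OF assms(1)] qf_add[OF assms(2)] qf_add_matrix
    inner_mult_matrix_vector_mult qf_matrix_vector_mult
  by (simp add: algebra_simps)

section \<open>The noise filtration\<close>

locale noise_filtration = prob_space M for M :: "'w measure" +
  fixes x0 :: "'w \<Rightarrow> real^'n" and w :: "nat \<Rightarrow> 'w \<Rightarrow> real"
  assumes x0_measurable[measurable]: "x0 \<in> borel_measurable M"
    and w_measurable[measurable]: "\<And>k. w k \<in> borel_measurable M"
    and integrable_w_square: "\<And>k. integrable M (\<lambda>\<omega>. (w k \<omega>)\<^sup>2)"
    and cond_exp_w: "\<And>k. AE \<omega> in M. real_cond_exp M (Fp M x0 w k) (w k) \<omega> = 0"
    and cond_exp_w_square: "\<And>k. AE \<omega> in M. real_cond_exp M (Fp M x0 w k) (\<lambda>\<eta>. (w k \<eta>)\<^sup>2) \<omega> = 1"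
begin

abbreviation F :: "nat \<Rightarrow> 'w measure" where
  "F k \<equiv> Fp M x0 w k"

definition generators :: "nat \<Rightarrow> 'w set set" where
  "generators k = ((if k = 0 then {} else {x0 -` B \<inter> space M | B. B \<in> sets borel})
      \<union> (\<Union>l<k. {w l -` B \<inter> space M | B. B \<in> sets borel}))"

lemma space_F[simp]: "space (F k) = space M"
  unfolding Fp_def by (simp add: space_measure_of_conv)

lemma sets_F: "sets (F k) = sigma_sets (space M) (generators k)"
proof -
  have "generators k \<subseteq> Pow (space M)" unfolding generators_def by auto
  then show ?thesis unfolding Fp_def generators_def[symmetric] by simp
qed

lemma sets_F_subset: "sets (F k) \<subseteq> sets M"
proof -
  have "generators k \<subseteq> sets M" unfolding generators_def by (auto simp: measurable_sets)
  then show ?thesis unfolding sets_F by (rule sets.sigma_sets_subset)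
qed

lemma sigma_finite_subalgebra_F: "sigma_finite_subalgebra M (F k)"
  by (rule finite_measure_subalgebra_is_sigma_finite)
     (simp add: finite_measure_subalgebra_def finite_measure_subalgebra_axioms_def
        subalgebra_def sets_F_subset)

lemma measurable_F_mono: "j \<le> l \<Longrightarrow> f \<in> borel_measurable (F j) \<Longrightarrow> f \<in> borel_measurable (F l)"
proof -
  assume "j \<le> l"
  then have "generators j \<subseteq> generators l" unfolding generators_def by (intro Un_mono UN_mono) auto
  then have "sets (F j) \<subseteq> sets (F l)" unfolding sets_F by (rule sigma_sets_mono')
  then show "f \<in> borel_measurable (F j) \<Longrightarrow> f \<in> borel_measurable (F l)"
    using measurable_mono[of borel borel "F j" "F l"] by auto
qed

lemma measurable_F_imp_M: "f \<in> borel_measurable (F j) \<Longrightarrow> f \<in> borel_measurable M"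
  using measurable_from_subalg sets_F_subset subalgebra_def by (metis space_F)

lemma w_measurable_F_Suc: "w l \<in> borel_measurable (F (Suc l))"
  unfolding measurable_def
proof safe
  fix B :: "real set" assume "B \<in> sets borel"
  then have "w l -` B \<inter> space M \<in> generators (Suc l)" unfolding generators_def by blast
  then show "w l -` B \<inter> space (F (Suc l)) \<in> sets (F (Suc l))" unfolding sets_F by auto
qed auto

lemma nn_cond_exp_w_square: "AE \<omega> in M. nn_cond_exp M (F l) (\<lambda>\<eta>. ennreal ((w l \<eta>)\<^sup>2)) \<omega> = 1"
proof -
  interpret S: sigma_finite_subalgebra M "F l" by (rule sigma_finite_subalgebra_F)
  let ?g = "\<lambda>\<eta>. (w l \<eta>)\<^sup>2"
  let ?c = "nn_cond_exp M (F l) (\<lambda>\<eta>. ennreal (?g \<eta>))"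
  have zero: "AE \<omega> in M. (0::ennreal) = nn_cond_exp M (F l) (\<lambda>_. 0) \<omega>"
    by (rule S.nn_cond_exp_F_meas) simp
  have neg: "(\<lambda>x. ennreal (- ?g x)) = (\<lambda>_. 0)"
    by (rule ext) (simp add: ennreal_neg)
  have "(\<integral>\<^sup>+ x. 1 * ?c x \<partial>M) = (\<integral>\<^sup>+ x. 1 * ennreal (?g x) \<partial>M)"
    by (rule S.nn_cond_exp_intg) auto
  also have "\<dots> = ennreal (\<integral> x. ?g x \<partial>M)"
    using integrable_w_square by (simp add: nn_integral_eq_integral)
  finally have "integral\<^sup>N M ?c \<noteq> \<infinity>" by simp
  then have finite: "AE x in M. ?c x \<noteq> \<infinity>"
    by (intro nn_integral_noteq_infinite) auto
  show ?thesis using zero finite cond_exp_w_square[of l]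
  proof eventually_elim
    case (elim x)
    then have "enn2real (?c x) = 1"
      unfolding real_cond_exp_def neg elim(1)[symmetric] by simp
    moreover have "ennreal (enn2real (?c x)) = ?c x"
      using elim(2) by (simp add: ennreal_enn2real_if)
    ultimately show ?case by simp
  qed
qed

lemma integrable_mult_w_square:
  assumes f: "f \<in> borel_measurable (F l)" "integrable M f" "\<And>x. 0 \<le> f x"
  shows "integrable M (\<lambda>x. f x * (w l x)\<^sup>2)"
proof -
  interpret S: sigma_finite_subalgebra M "F l" by (rule sigma_finite_subalgebra_F)
  have [measurable]: "f \<in> borel_measurable M" using measurable_F_imp_M[OF f(1)] .
  have "(\<lambda>x. ennreal (f x)) \<in> borel_measurable (F l)" using f(1) by measurable
  have "(\<integral>\<^sup>+ x. ennreal (f x * (w l x)\<^sup>2) \<partial>M) = (\<integral>\<^sup>+ x. ennreal (f x) * ennreal ((w l x)\<^sup>2) \<partial>M)"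
    using f(3) by (simp add: ennreal_mult)
  also have "\<dots> = (\<integral>\<^sup>+ x. ennreal (f x) * nn_cond_exp M (F l) (\<lambda>\<eta>. ennreal ((w l \<eta>)\<^sup>2)) x \<partial>M)"
    by (rule S.nn_cond_exp_intg[symmetric]) (use \<open>(\<lambda>x. ennreal (f x)) \<in> _\<close> in auto)
  also have "\<dots> = (\<integral>\<^sup>+ x. ennreal (f x) \<partial>M)"
    by (rule nn_integral_cong_AE) (use nn_cond_exp_w_square[of l] in auto)
  also have "\<dots> = ennreal (\<integral> x. f x \<partial>M)"
    using f by (simp add: nn_integral_eq_integral)
  finally show ?thesis
    by (intro integrableI_nonneg) (auto simp: f(3))
qed


definition L2 :: "('w \<Rightarrow> real^'a) \<Rightarrow> bool" where
  "L2 f \<longleftrightarrow> f \<in> borel_measurable M \<and> integrable M (\<lambda>\<omega>. (norm (f \<omega>))\<^sup>2)"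

lemma L2_measurable[measurable_dest]: "L2 f \<Longrightarrow> f \<in> borel_measurable M"
  by (simp add: L2_def)

lemma L2F_iff_L2: "L2F M x0 w k v \<longleftrightarrow> v \<in> borel_measurable (F k) \<and> L2 v"
  unfolding L2F_def L2_def using measurable_F_imp_M by blast

lemma L2_const: "L2 (\<lambda>\<omega>. c)"
  unfolding L2_def by simp

lemma L2_scaleR: "L2 f \<Longrightarrow> L2 (\<lambda>\<omega>. c *\<^sub>R f \<omega>)"
  unfolding L2_def by (auto simp: power_mult_distrib)

lemma L2_add:
  assumes f: "L2 f" and g: "L2 g"
  shows "L2 (\<lambda>\<omega>. f \<omega> + g \<omega>)"
proof -
  have bound: "(norm (a + b))\<^sup>2 \<le> 2 * (norm a)\<^sup>2 + 2 * (norm b)\<^sup>2" for a b :: "real^'a"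
  proof -
    have "(norm (a + b))\<^sup>2 \<le> (norm a + norm b)\<^sup>2"
      by (simp add: power_mono norm_triangle_ineq)
    also have "\<dots> \<le> 2 * (norm a)\<^sup>2 + 2 * (norm b)\<^sup>2"
      using zero_le_power2[of "norm a - norm b"] unfolding power2_sum power2_diff by linarith
    finally show ?thesis .
  qed
  have [measurable]: "f \<in> borel_measurable M" "g \<in> borel_measurable M" using f g by auto
  have "integrable M (\<lambda>\<omega>. (norm (f \<omega> + g \<omega>))\<^sup>2)"
    by (rule Bochner_Integration.integrable_bound
          [where f="\<lambda>\<omega>. 2 * (norm (f \<omega>))\<^sup>2 + 2 * (norm (g \<omega>))\<^sup>2"])
       (use f g bound in \<open>auto simp: L2_def\<close>)
  then show ?thesis unfolding L2_def by simp
qed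

lemma L2_diff: "L2 f \<Longrightarrow> L2 g \<Longrightarrow> L2 (\<lambda>\<omega>. f \<omega> - g \<omega>)"
  using L2_add[of f "\<lambda>\<omega>. (-1) *\<^sub>R g \<omega>"] L2_scaleR[of g "-1"] by simp

lemma L2_matrix_vector_mult:
  assumes f: "L2 f"
  shows "L2 (\<lambda>\<omega>. (P :: real^'a^'b) *v f \<omega>)"
proof -
  obtain K where K: "\<And>x. norm (P *v x) \<le> norm x * K"
    using bounded_linear.bounded[OF matrix_vector_mul_bounded_linear[of P]] by (auto simp: mult.commute)
  have bound: "(norm (P *v x))\<^sup>2 \<le> K\<^sup>2 * (norm x)\<^sup>2" for x
    using power_mono[OF K[of x] norm_ge_zero] by (simp add: power_mult_distrib mult.commute)
  have [measurable]: "f \<in> borel_measurable M" using f by auto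
  have "integrable M (\<lambda>\<omega>. (norm (P *v f \<omega>))\<^sup>2)"
    by (rule Bochner_Integration.integrable_bound[where f="\<lambda>\<omega>. K\<^sup>2 * (norm (f \<omega>))\<^sup>2"])
       (use f bound in \<open>auto simp: L2_def\<close>)
  then show ?thesis unfolding L2_def by simp
qed

lemma L2_w_scaleR:
  assumes "f \<in> borel_measurable (F l)" and "L2 f"
  shows "L2 (\<lambda>\<omega>. w l \<omega> *\<^sub>R f \<omega>)"
proof -
  have "integrable M (\<lambda>\<omega>. (norm (f \<omega>))\<^sup>2 * (w l \<omega>)\<^sup>2)"
    by (rule integrable_mult_w_square) (use assms in \<open>auto simp: L2_def\<close>)
  moreover have "f \<in> borel_measurable M" using assms(2) by auto
  ultimately show ?thesis unfolding L2_def by (simp add: power_mult_distrib mult.commute)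
qed

lemma integrable_component_mult_L2:
  assumes f: "L2 f" and g: "L2 g"
  shows "integrable M (\<lambda>\<omega>. (f \<omega> :: real^'a) $ i * (g \<omega> :: real^'b) $ j)"
proof (rule Bochner_Integration.integrable_bound[where f="\<lambda>\<omega>. (norm (f \<omega>))\<^sup>2 + (norm (g \<omega>))\<^sup>2"])
  show "integrable M (\<lambda>\<omega>. (norm (f \<omega>))\<^sup>2 + (norm (g \<omega>))\<^sup>2)" using f g by (simp add: L2_def)
  have [measurable]: "f \<in> borel_measurable M" "g \<in> borel_measurable M" using f g by auto
  show "(\<lambda>\<omega>. f \<omega> $ i * g \<omega> $ j) \<in> borel_measurable M"
    by (intro borel_measurable_times borel_measurable_vec_nth) measurable
  have "\<bar>a $ i * b $ j\<bar> \<le> (norm a)\<^sup>2 + (norm b)\<^sup>2" for a :: "real^'a" and b :: "real^'b"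
  proof -
    have "\<bar>a $ i * b $ j\<bar> \<le> norm a * norm b"
      unfolding abs_mult by (rule mult_mono) (auto simp: component_le_norm_cart)
    also have "\<dots> \<le> (norm a)\<^sup>2 + (norm b)\<^sup>2"
      using sum_squares_bound[of "norm a" "norm b"] mult_nonneg_nonneg[OF norm_ge_zero norm_ge_zero, of a b] by linarith
    finally show ?thesis .
  qed
  then show "AE x in M. norm (f x $ i * g x $ j) \<le> norm ((norm (f x))\<^sup>2 + (norm (g x))\<^sup>2)"
    by (intro AE_I2) simp
qed

lemma integrable_component_L2: "L2 f \<Longrightarrow> integrable M (\<lambda>\<omega>. (f \<omega> :: real^'a) $ i)"
  using integrable_component_mult_L2[OF _ L2_const[of "1::real^'a"], of f i i] by simp

lemma integrable_inner_L2: "L2 f \<Longrightarrow> L2 g \<Longrightarrow> integrable M (\<lambda>\<omega>. (f \<omega> :: real^'a) \<bullet> g \<omega>)"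
  unfolding inner_vec_def inner_real_def
  by (intro Bochner_Integration.integrable_sum integrable_component_mult_L2)

lemma integrable_qf_L2: "L2 f \<Longrightarrow> integrable M (\<lambda>\<omega>. qf P (f \<omega>))"
  unfolding qf_def by (intro integrable_inner_L2 L2_matrix_vector_mult)

lemma integrable_cross_L2: "L2 f \<Longrightarrow> L2 g \<Longrightarrow> integrable M (\<lambda>\<omega>. (P *v f \<omega>) \<bullet> g \<omega>)"
  by (intro integrable_inner_L2 L2_matrix_vector_mult)

lemma L2_step:
  assumes "a \<in> borel_measurable (F j)" "L2 a" and "b \<in> borel_measurable (F j)" "L2 b"
  shows "(\<lambda>\<omega>. (a \<omega> :: real^'a) + w j \<omega> *\<^sub>R b \<omega>) \<in> borel_measurable (F (Suc j))"
    and "L2 (\<lambda>\<omega>. a \<omega> + w j \<omega> *\<^sub>R b \<omega>)"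
proof -
  have [measurable]: "a \<in> borel_measurable (F (Suc j))" "b \<in> borel_measurable (F (Suc j))"
    "w j \<in> borel_measurable (F (Suc j))"
    using measurable_F_mono[OF _ assms(1)] measurable_F_mono[OF _ assms(3)] w_measurable_F_Suc by auto
  show "(\<lambda>\<omega>. a \<omega> + w j \<omega> *\<^sub>R b \<omega>) \<in> borel_measurable (F (Suc j))" by measurable
  show "L2 (\<lambda>\<omega>. a \<omega> + w j \<omega> *\<^sub>R b \<omega>)" using L2_add[OF assms(2) L2_w_scaleR[OF assms(3,4)]] .
qed

lemma vcond_exp_nth[simp]: "vcond_exp M G Z \<omega> $ i = real_cond_exp M G (\<lambda>\<eta>. Z \<eta> $ i) \<omega>"
  by (simp add: vcond_exp_def)

lemma vcond_exp_measurable_F[measurable]: "vcond_exp M (F l) Z \<in> borel_measurable (F l)"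
  unfolding borel_measurable_vec_iff by simp

lemma vcond_exp_measurable[measurable]: "vcond_exp M (F l) Z \<in> borel_measurable M"
  by (rule measurable_F_imp_M[OF vcond_exp_measurable_F])

lemma integral_inner_vcond_exp:
  assumes g: "g \<in> borel_measurable (F l)" and Z: "Z \<in> borel_measurable M"
    and int: "\<And>i. integrable M (\<lambda>\<omega>. (g \<omega> :: real^'a) $ i * Z \<omega> $ i)"
  shows "integrable M (\<lambda>\<omega>. vcond_exp M (F l) Z \<omega> \<bullet> g \<omega>)"
    and "(\<integral>\<omega>. Z \<omega> \<bullet> g \<omega> \<partial>M) = (\<integral>\<omega>. vcond_exp M (F l) Z \<omega> \<bullet> g \<omega> \<partial>M)"
proof -
  interpret S: sigma_finite_subalgebra M "F l" by (rule sigma_finite_subalgebra_F)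
  have comp: "integrable M (\<lambda>\<omega>. g \<omega> $ i * real_cond_exp M (F l) (\<lambda>\<eta>. Z \<eta> $ i) \<omega>)"
     "(\<integral>\<omega>. g \<omega> $ i * real_cond_exp M (F l) (\<lambda>\<eta>. Z \<eta> $ i) \<omega> \<partial>M) = (\<integral>\<omega>. g \<omega> $ i * Z \<omega> $ i \<partial>M)"
    for i using S.real_cond_exp_intg[OF int borel_measurable_vec_nth[OF g] borel_measurable_vec_nth[OF Z]]
    by auto
  have sum_vcond: "vcond_exp M (F l) Z \<omega> \<bullet> g \<omega> = (\<Sum>i\<in>UNIV. g \<omega> $ i * real_cond_exp M (F l) (\<lambda>\<eta>. Z \<eta> $ i) \<omega>)"
    and sum_Z: "Z \<omega> \<bullet> g \<omega> = (\<Sum>i\<in>UNIV. g \<omega> $ i * Z \<omega> $ i)" for \<omega>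
    by (simp_all add: inner_vec_def mult.commute)
  show "integrable M (\<lambda>\<omega>. vcond_exp M (F l) Z \<omega> \<bullet> g \<omega>)"
    unfolding sum_vcond by (intro Bochner_Integration.integrable_sum comp)
  show "(\<integral>\<omega>. Z \<omega> \<bullet> g \<omega> \<partial>M) = (\<integral>\<omega>. vcond_exp M (F l) Z \<omega> \<bullet> g \<omega> \<partial>M)"
    unfolding sum_vcond sum_Z using comp int by (simp add: integral_sum)
qed

lemma integral_inner_noise_step:
  assumes g1: "g1 \<in> borel_measurable (F l)" "L2 g1" and g2: "g2 \<in> borel_measurable (F l)" "L2 g2"
    and Z: "L2 Z"
  defines "V1 \<equiv> vcond_exp M (F l) Z" and "V2 \<equiv> vcond_exp M (F l) (\<lambda>\<eta>. w l \<eta> *\<^sub>R Z \<eta>)"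
  shows "integrable M (\<lambda>\<omega>. V1 \<omega> \<bullet> g1 \<omega> + V2 \<omega> \<bullet> g2 \<omega>)"
    and "(\<integral>\<omega>. Z \<omega> \<bullet> ((g1 \<omega> :: real^'a) + w l \<omega> *\<^sub>R g2 \<omega>) \<partial>M)
       = (\<integral>\<omega>. V1 \<omega> \<bullet> g1 \<omega> + V2 \<omega> \<bullet> g2 \<omega> \<partial>M)"
proof -
  have [measurable]: "Z \<in> borel_measurable M" using Z by auto
  have wg2: "L2 (\<lambda>\<omega>. w l \<omega> *\<^sub>R g2 \<omega>)" using L2_w_scaleR[OF g2] .
  have p1: "integrable M (\<lambda>\<omega>. V1 \<omega> \<bullet> g1 \<omega>)" "(\<integral>\<omega>. Z \<omega> \<bullet> g1 \<omega> \<partial>M) = (\<integral>\<omega>. V1 \<omega> \<bullet> g1 \<omega> \<partial>M)"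
    unfolding V1_def using integral_inner_vcond_exp[OF g1(1) _ integrable_component_mult_L2[OF g1(2) Z]]
    by auto
  have swap: "g2 \<omega> $ i * (w l \<omega> *\<^sub>R Z \<omega>) $ i = (w l \<omega> *\<^sub>R g2 \<omega>) $ i * Z \<omega> $ i" for \<omega> i
    by simp
  have p2: "integrable M (\<lambda>\<omega>. V2 \<omega> \<bullet> g2 \<omega>)"
      "(\<integral>\<omega>. (w l \<omega> *\<^sub>R Z \<omega>) \<bullet> g2 \<omega> \<partial>M) = (\<integral>\<omega>. V2 \<omega> \<bullet> g2 \<omega> \<partial>M)"
    unfolding V2_def using integral_inner_vcond_exp[OF g2(1), of "\<lambda>\<eta>. w l \<eta> *\<^sub>R Z \<eta>", unfolded swap]
      integrable_component_mult_L2[OF wg2 Z] by auto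
  show "integrable M (\<lambda>\<omega>. V1 \<omega> \<bullet> g1 \<omega> + V2 \<omega> \<bullet> g2 \<omega>)"
    using p1(1) p2(1) by simp
  have "Z \<omega> \<bullet> (g1 \<omega> + w l \<omega> *\<^sub>R g2 \<omega>) = Z \<omega> \<bullet> g1 \<omega> + (w l \<omega> *\<^sub>R Z \<omega>) \<bullet> g2 \<omega>" for \<omega>
    by (simp add: inner_add_right)
  then show "(\<integral>\<omega>. Z \<omega> \<bullet> (g1 \<omega> + w l \<omega> *\<^sub>R g2 \<omega>) \<partial>M) = (\<integral>\<omega>. V1 \<omega> \<bullet> g1 \<omega> + V2 \<omega> \<bullet> g2 \<omega> \<partial>M)"
    using integrable_inner_L2[OF Z g1(2)] integrable_inner_L2[OF Z wg2] p1 p2 by simp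
qed

lemma real_cond_exp_noise_step:
  fixes a b :: "'w \<Rightarrow> real"
  assumes am: "a \<in> borel_measurable (F l)" and bm: "b \<in> borel_measurable (F l)"
    and ai: "integrable M a" and bi: "integrable M b"
    and wai: "integrable M (\<lambda>\<eta>. a \<eta> * w l \<eta>)" and wbi: "integrable M (\<lambda>\<eta>. b \<eta> * w l \<eta>)"
  shows "AE \<omega> in M. real_cond_exp M (F l) (\<lambda>\<eta>. a \<eta> + w l \<eta> * b \<eta>) \<omega> = a \<omega>"
    and "AE \<omega> in M. real_cond_exp M (F l) (\<lambda>\<eta>. w l \<eta> * (a \<eta> + w l \<eta> * b \<eta>)) \<omega> = b \<omega>"
proof -
  interpret S: sigma_finite_subalgebra M "F l" by (rule sigma_finite_subalgebra_F)
  have [measurable]: "b \<in> borel_measurable M" using measurable_F_imp_M[OF bm] .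
  have "(\<lambda>\<eta>. \<bar>b \<eta>\<bar>) \<in> borel_measurable (F l)" using bm by measurable
  then have "integrable M (\<lambda>\<eta>. \<bar>b \<eta>\<bar> * (w l \<eta>)\<^sup>2)"
    by (rule integrable_mult_w_square) (use bi in auto)
  then have wwbi: "integrable M (\<lambda>\<eta>. b \<eta> * (w l \<eta>)\<^sup>2)"
    by (rule Bochner_Integration.integrable_bound) (measurable, simp add: abs_mult)
  have w2m: "(\<lambda>\<eta>. (w l \<eta>)\<^sup>2) \<in> borel_measurable M" by measurable
  have e1: "(\<lambda>\<eta>. a \<eta> + w l \<eta> * b \<eta>) = (\<lambda>\<eta>. a \<eta> + b \<eta> * w l \<eta>)"
    by (simp add: mult.commute)
  show "AE \<omega> in M. real_cond_exp M (F l) (\<lambda>\<eta>. a \<eta> + w l \<eta> * b \<eta>) \<omega> = a \<omega>"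
    using S.real_cond_exp_add[OF ai wbi] S.real_cond_exp_F_meas[OF ai am]
      S.real_cond_exp_mult[OF bm w_measurable wbi] cond_exp_w[of l]
    unfolding e1 by eventually_elim simp
  have e2: "(\<lambda>\<eta>. w l \<eta> * (a \<eta> + w l \<eta> * b \<eta>)) = (\<lambda>\<eta>. a \<eta> * w l \<eta> + b \<eta> * (w l \<eta>)\<^sup>2)"
    by (simp add: algebra_simps power2_eq_square)
  show "AE \<omega> in M. real_cond_exp M (F l) (\<lambda>\<eta>. w l \<eta> * (a \<eta> + w l \<eta> * b \<eta>)) \<omega> = b \<omega>"
    using S.real_cond_exp_add[OF wai wwbi] S.real_cond_exp_mult[OF am w_measurable wai]
      S.real_cond_exp_mult[OF bm w2m wwbi] cond_exp_w[of l] cond_exp_w_square[of l]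
    unfolding e2 by eventually_elim simp
qed

lemma vcond_exp_noise_step:
  assumes a: "a \<in> borel_measurable (F l)" "L2 a" and b: "b \<in> borel_measurable (F l)" "L2 b"
  shows "AE \<omega> in M. vcond_exp M (F l) (\<lambda>\<eta>. (a \<eta> :: real^'a) + w l \<eta> *\<^sub>R b \<eta>) \<omega> = a \<omega>"
    and "AE \<omega> in M. vcond_exp M (F l) (\<lambda>\<eta>. w l \<eta> *\<^sub>R (a \<eta> + w l \<eta> *\<^sub>R b \<eta>)) \<omega> = b \<omega>"
proof -
  have "integrable M (\<lambda>\<eta>. a \<eta> $ i * w l \<eta>)" "integrable M (\<lambda>\<eta>. b \<eta> $ i * w l \<eta>)" for i
    using integrable_component_L2[OF L2_w_scaleR[OF a]] integrable_component_L2[OF L2_w_scaleR[OF b]]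
    by (simp_all add: mult.commute)
  note component = real_cond_exp_noise_step[OF borel_measurable_vec_nth[OF a(1)]
      borel_measurable_vec_nth[OF b(1)] integrable_component_L2[OF a(2)] integrable_component_L2[OF b(2)]
      this]
  show "AE \<omega> in M. vcond_exp M (F l) (\<lambda>\<eta>. a \<eta> + w l \<eta> *\<^sub>R b \<eta>) \<omega> = a \<omega>"
    using eventually_all_finite[OF component(1)] by eventually_elim (simp add: vec_eq_iff)
  show "AE \<omega> in M. vcond_exp M (F l) (\<lambda>\<eta>. w l \<eta> *\<^sub>R (a \<eta> + w l \<eta> *\<^sub>R b \<eta>)) \<omega> = b \<omega>"
    using eventually_all_finite[OF component(2)] by eventually_elim (simp add: vec_eq_iff)
qed

end

section \<open>Closed-loop states and costs\<close>

locale lq_feedback = noise_filtration M x0 w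
  for M :: "'w measure" and x0 :: "'w \<Rightarrow> real^'n" and w +
  fixes N :: nat
    and A :: "nat \<Rightarrow> nat \<Rightarrow> real^'n^'n" and B :: "nat \<Rightarrow> nat \<Rightarrow> real^'m^'n"
    and C :: "nat \<Rightarrow> nat \<Rightarrow> real^'n^'n" and D :: "nat \<Rightarrow> nat \<Rightarrow> real^'m^'n"
    and Q :: "nat \<Rightarrow> nat \<Rightarrow> real^'n^'n" and R :: "nat \<Rightarrow> nat \<Rightarrow> real^'m^'m"
    and G :: "nat \<Rightarrow> real^'n^'n" and \<Phi> :: "nat \<Rightarrow> real^'n^'m"
  assumes Q_symmetric: "\<And>t k. t < N \<Longrightarrow> t \<le> k \<Longrightarrow> k < N \<Longrightarrow> transpose (Q t k) = Q t k"
    and R_symmetric: "\<And>t k. t < N \<Longrightarrow> t \<le> k \<Longrightarrow> k < N \<Longrightarrow> transpose (R t k) = R t k"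
    and G_symmetric: "\<And>t. t < N \<Longrightarrow> transpose (G t) = G t"
begin

definition Acl :: "nat \<Rightarrow> nat \<Rightarrow> real^'n^'n" where
  "Acl k l = A k l + B k l ** \<Phi> l"

definition Ccl :: "nat \<Rightarrow> nat \<Rightarrow> real^'n^'n" where
  "Ccl k l = C k l + D k l ** \<Phi> l"

definition Qcl :: "nat \<Rightarrow> nat \<Rightarrow> real^'n^'n" where
  "Qcl k l = Q k l + transpose (\<Phi> l) ** R k l ** \<Phi> l"

abbreviation cl :: "nat \<Rightarrow> ('w \<Rightarrow> real^'n) \<Rightarrow> ('w \<Rightarrow> real^'m) \<Rightarrow> nat \<Rightarrow> 'w \<Rightarrow> real^'n" where
  "cl \<equiv> cl_state A B C D w \<Phi>"

abbreviation Xcl :: "nat \<Rightarrow> ('w \<Rightarrow> real^'n) \<Rightarrow> nat \<Rightarrow> 'w \<Rightarrow> real^'n" where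
  "Xcl k y \<equiv> cl k y (\<lambda>\<omega>. \<Phi> k *v y \<omega>)"

abbreviation Ycl :: "nat \<Rightarrow> ('w \<Rightarrow> real^'m) \<Rightarrow> nat \<Rightarrow> 'w \<Rightarrow> real^'n" where
  "Ycl k u \<equiv> cl k (\<lambda>\<omega>. 0) u"

lemma cl_state_le: "j \<le> k \<Longrightarrow> cl k y v j = y"
  by (induction j) auto

lemma cl_state_Suc_self:
  "cl k y v (Suc k) = (\<lambda>\<omega>. A k k *v y \<omega> + B k k *v v \<omega> + w k \<omega> *\<^sub>R (C k k *v y \<omega> + D k k *v v \<omega>))"
  by (simp add: cl_state_le)

lemma cl_state_Suc_gt:
  "k < j \<Longrightarrow> cl k y v (Suc j) = (\<lambda>\<omega>. Acl k j *v cl k y v j \<omega> + w j \<omega> *\<^sub>R (Ccl k j *v cl k y v j \<omega>))"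
  by (simp add: Acl_def Ccl_def)

lemma Xcl_Suc:
  "k \<le> l \<Longrightarrow> Xcl k y (Suc l) \<omega> = Acl k l *v Xcl k y l \<omega> + w l \<omega> *\<^sub>R (Ccl k l *v Xcl k y l \<omega>)"
  by (cases "k = l") (simp_all add: cl_state_le Acl_def Ccl_def matrix_vector_mult_add_mult)

lemma cl_state_add:
  "cl k (\<lambda>\<omega>. y1 \<omega> + y2 \<omega>) (\<lambda>\<omega>. v1 \<omega> + v2 \<omega>) j \<omega> = cl k y1 v1 j \<omega> + cl k y2 v2 j \<omega>"
  by (induction j) (auto simp: algebra_simps)

lemma Ycl_scaleR: "Ycl k (\<lambda>\<omega>. c *\<^sub>R u \<omega>) j \<omega> = c *\<^sub>R Ycl k u j \<omega>"
  by (induction j) (auto simp: algebra_simps)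

lemma cl_state_adapted:
  assumes y: "y \<in> borel_measurable (F k)" "L2 y" and v: "v \<in> borel_measurable (F k)" "L2 v"
    and "k \<le> j"
  shows "cl k y v j \<in> borel_measurable (F j) \<and> L2 (cl k y v j)"
  using \<open>k \<le> j\<close>
proof (induction j)
  case 0
  then show ?case using y by simp
next
  case (Suc j)
  consider "Suc j = k" | "j = k" | "k < j" using Suc.prems by linarith
  then show ?case
  proof cases
    case 1
    then show ?thesis using y cl_state_le[of "Suc j" k y v] by simp
  next
    case 2
    have "(\<lambda>\<omega>. A k k *v y \<omega> + B k k *v v \<omega>) \<in> borel_measurable (F k)"
      "(\<lambda>\<omega>. C k k *v y \<omega> + D k k *v v \<omega>) \<in> borel_measurable (F k)"
      "L2 (\<lambda>\<omega>. A k k *v y \<omega> + B k k *v v \<omega>)" "L2 (\<lambda>\<omega>. C k k *v y \<omega> + D k k *v v \<omega>)"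
      using y v by (auto intro!: L2_add L2_matrix_vector_mult)
    from L2_step[OF this(1,3,2,4)] show ?thesis
      unfolding 2 cl_state_Suc_self by (simp add: add.assoc)
  next
    case 3
    then have "cl k y v j \<in> borel_measurable (F j)" "L2 (cl k y v j)" using Suc.IH by auto
    then have "(\<lambda>\<omega>. Acl k j *v cl k y v j \<omega>) \<in> borel_measurable (F j)"
      "(\<lambda>\<omega>. Ccl k j *v cl k y v j \<omega>) \<in> borel_measurable (F j)"
      "L2 (\<lambda>\<omega>. Acl k j *v cl k y v j \<omega>)" "L2 (\<lambda>\<omega>. Ccl k j *v cl k y v j \<omega>)"
      by (auto intro!: L2_matrix_vector_mult)
    from L2_step[OF this(1,3,2,4)] show ?thesis unfolding cl_state_Suc_gt[OF 3] by simp
  qed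
qed

lemma Xcl_adapted:
  assumes "y \<in> borel_measurable (F k)" "L2 y" "k \<le> j"
  shows "Xcl k y j \<in> borel_measurable (F j) \<and> L2 (Xcl k y j)"
  using assms by (intro cl_state_adapted) (auto intro: L2_matrix_vector_mult)

lemma Ycl_adapted:
  assumes "u \<in> borel_measurable (F k)" "L2 u" "k \<le> j"
  shows "Ycl k u j \<in> borel_measurable (F j) \<and> L2 (Ycl k u j)"
  using assms by (intro cl_state_adapted) (auto simp: L2_const)

lemma eq_state_adapted:
  "eq_state A B C D w \<Phi> t x j \<in> borel_measurable (F j) \<and> L2 (eq_state A B C D w \<Phi> t x j)"
proof (induction j)
  case 0
  then show ?case by (simp add: L2_const)
next
  case (Suc j)
  show ?case
  proof (cases "j < t")
    case True
    then show ?thesis by (simp add: L2_const)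
  next
    case False
    let ?E = "eq_state A B C D w \<Phi> t x j"
    have "(\<lambda>\<omega>. (A j j + B j j ** \<Phi> j) *v ?E \<omega>) \<in> borel_measurable (F j)"
      "(\<lambda>\<omega>. (C j j + D j j ** \<Phi> j) *v ?E \<omega>) \<in> borel_measurable (F j)"
      "L2 (\<lambda>\<omega>. (A j j + B j j ** \<Phi> j) *v ?E \<omega>)" "L2 (\<lambda>\<omega>. (C j j + D j j ** \<Phi> j) *v ?E \<omega>)"
      using Suc.IH by (auto intro!: L2_matrix_vector_mult)
    from L2_step[OF this(1,3,2,4)] show ?thesis using False by simp
  qed
qed

lemma ol_state_fb_control: "ol_state A B C D w k y (fb_control \<Phi> k v (cl k y v)) j = cl k y v j"
proof (induction j)
  case (Suc j)
  then show ?case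
    by (intro ext) (auto simp: fb_control_def cl_state_le matrix_vector_mult_add_mult matrix_vector_mul_assoc algebra_simps)
qed simp

definition running_cost :: "nat \<Rightarrow> ('w \<Rightarrow> real^'n) \<Rightarrow> ('w \<Rightarrow> real^'m) \<Rightarrow> nat \<Rightarrow> real" where
  "running_cost k y v l =
     (\<integral>\<omega>. qf (Q k l) (cl k y v l \<omega>) + qf (R k l) (fb_control \<Phi> k v (cl k y v) l \<omega>) \<partial>M)"

definition cost :: "nat \<Rightarrow> ('w \<Rightarrow> real^'n) \<Rightarrow> ('w \<Rightarrow> real^'m) \<Rightarrow> real" where
  "cost k y v = lq_cost M N A B C D Q R G w k y (fb_control \<Phi> k v (cl k y v))"

lemma cost_eq: "cost k y v = (\<Sum>l=k..<N. running_cost k y v l) + (\<integral>\<omega>. qf (G k) (cl k y v N \<omega>) \<partial>M)"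
  unfolding cost_def lq_cost_def ol_state_fb_control running_cost_def ..

definition cost_quad :: "nat \<Rightarrow> ('w \<Rightarrow> real^'m) \<Rightarrow> real" where
  "cost_quad k u = (\<integral>\<omega>. qf (R k k) (u \<omega>) \<partial>M)
     + (\<Sum>l=k..<N. \<integral>\<omega>. qf (Qcl k l) (Ycl k u l \<omega>) \<partial>M)
     + (\<integral>\<omega>. qf (G k) (Ycl k u N \<omega>) \<partial>M)"

definition cost_cross :: "nat \<Rightarrow> ('w \<Rightarrow> real^'n) \<Rightarrow> ('w \<Rightarrow> real^'m) \<Rightarrow> real" where
  "cost_cross k y u = (\<integral>\<omega>. (R k k *v (\<Phi> k *v y \<omega>)) \<bullet> u \<omega> \<partial>M)
     + (\<Sum>l=Suc k..<N. \<integral>\<omega>. (Qcl k l *v Xcl k y l \<omega>) \<bullet> Ycl k u l \<omega> \<partial>M)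
     + (\<integral>\<omega>. (G k *v Xcl k y N \<omega>) \<bullet> Ycl k u N \<omega> \<partial>M)"

lemma cost_quad_scaleR: "cost_quad k (\<lambda>\<omega>. c *\<^sub>R u \<omega>) = c\<^sup>2 * cost_quad k u"
  unfolding cost_quad_def Ycl_scaleR qf_scaleR by (simp add: sum_distrib_left algebra_simps)

lemma running_cost_perturb:
  assumes l: "k \<le> l" "l < N"
    and y: "y \<in> borel_measurable (F k)" "L2 y" and u: "u \<in> borel_measurable (F k)" "L2 u"
  shows "running_cost k y (\<lambda>\<omega>. \<Phi> k *v y \<omega> + u \<omega>) l = running_cost k y (\<lambda>\<omega>. \<Phi> k *v y \<omega>) l
    + 2 * (if l = k then \<integral>\<omega>. (R k k *v (\<Phi> k *v y \<omega>)) \<bullet> u \<omega> \<partial>M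
           else \<integral>\<omega>. (Qcl k l *v Xcl k y l \<omega>) \<bullet> Ycl k u l \<omega> \<partial>M)
    + (if l = k then \<integral>\<omega>. qf (R k k) (u \<omega>) \<partial>M else \<integral>\<omega>. qf (Qcl k l) (Ycl k u l \<omega>) \<partial>M)"
proof -
  let ?v0 = "\<lambda>\<omega>. \<Phi> k *v y \<omega>" and ?v1 = "\<lambda>\<omega>. \<Phi> k *v y \<omega> + u \<omega>"
  have X: "L2 (Xcl k y l)" and Y: "L2 (Ycl k u l)"
    using Xcl_adapted[OF y l(1)] Ycl_adapted[OF u l(1)] by auto
  have integrable0: "integrable M (\<lambda>\<omega>. qf (Q k l) (Xcl k y l \<omega>) + qf (R k l) (fb_control \<Phi> k ?v0 (Xcl k y) l \<omega>))"
    using X y(2) by (simp add: fb_control_def integrable_qf_L2 L2_matrix_vector_mult)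
  have split: "cl k y ?v1 l \<omega> = Xcl k y l \<omega> + Ycl k u l \<omega>" for \<omega>
    using cl_state_add[of k y "\<lambda>\<omega>. 0" ?v0 u] by simp
  show ?thesis
  proof (cases "l = k")
    case True
    have R_sym: "transpose (R k k) = R k k" using R_symmetric[of k k] l by simp
    have "qf (Q k l) (cl k y ?v1 l \<omega>) + qf (R k l) (fb_control \<Phi> k ?v1 (cl k y ?v1) l \<omega>)
        = (qf (Q k l) (Xcl k y l \<omega>) + qf (R k l) (fb_control \<Phi> k ?v0 (Xcl k y) l \<omega>))
          + 2 * ((R k k *v (\<Phi> k *v y \<omega>)) \<bullet> u \<omega>) + qf (R k k) (u \<omega>)" for \<omega>
      using True by (simp add: fb_control_def cl_state_le qf_add[OF R_sym])
    moreover have "integrable M (\<lambda>\<omega>. (R k k *v (\<Phi> k *v y \<omega>)) \<bullet> u \<omega>)"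
      using integrable_cross_L2[OF L2_matrix_vector_mult[OF y(2)] u(2)] .
    ultimately show ?thesis
      unfolding running_cost_def using True integrable0 integrable_qf_L2[OF u(2)] by simp
  next
    case False
    with l have "k < l" by simp
    have Q_sym: "transpose (Q k l) = Q k l" and R_sym: "transpose (R k l) = R k l"
      using Q_symmetric[of k l] R_symmetric[of k l] l by auto
    have "qf (Q k l) (cl k y ?v1 l \<omega>) + qf (R k l) (fb_control \<Phi> k ?v1 (cl k y ?v1) l \<omega>)
        = (qf (Q k l) (Xcl k y l \<omega>) + qf (R k l) (fb_control \<Phi> k ?v0 (Xcl k y) l \<omega>))
          + 2 * ((Qcl k l *v Xcl k y l \<omega>) \<bullet> Ycl k u l \<omega>) + qf (Qcl k l) (Ycl k u l \<omega>)" for \<omega>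
      using False qf_add_feedback[OF Q_sym R_sym, of "Xcl k y l \<omega>" "Ycl k u l \<omega>" "\<Phi> l"]
      by (simp add: fb_control_def split Qcl_def)
    then show ?thesis unfolding running_cost_def
      using False integrable0 integrable_cross_L2[OF X Y] integrable_qf_L2[OF Y] by simp
  qed
qed

lemma terminal_cost_perturb:
  assumes "k < N"
    and y: "y \<in> borel_measurable (F k)" "L2 y" and u: "u \<in> borel_measurable (F k)" "L2 u"
  shows "(\<integral>\<omega>. qf (G k) (cl k y (\<lambda>\<omega>. \<Phi> k *v y \<omega> + u \<omega>) N \<omega>) \<partial>M)
    = (\<integral>\<omega>. qf (G k) (Xcl k y N \<omega>) \<partial>M) + 2 * (\<integral>\<omega>. (G k *v Xcl k y N \<omega>) \<bullet> Ycl k u N \<omega> \<partial>M)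
      + (\<integral>\<omega>. qf (G k) (Ycl k u N \<omega>) \<partial>M)"
proof -
  have X: "L2 (Xcl k y N)" and Y: "L2 (Ycl k u N)"
    using Xcl_adapted[OF y] Ycl_adapted[OF u] \<open>k < N\<close> by auto
  have G_sym: "transpose (G k) = G k" using G_symmetric \<open>k < N\<close> by simp
  have "qf (G k) (cl k y (\<lambda>\<omega>. \<Phi> k *v y \<omega> + u \<omega>) N \<omega>)
      = qf (G k) (Xcl k y N \<omega>) + 2 * ((G k *v Xcl k y N \<omega>) \<bullet> Ycl k u N \<omega>) + qf (G k) (Ycl k u N \<omega>)" for \<omega>
    using cl_state_add[of k y "\<lambda>\<omega>. 0" "\<lambda>\<omega>. \<Phi> k *v y \<omega>" u] qf_add[OF G_sym] by simp
  then show ?thesis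
    using integrable_qf_L2[OF X] integrable_qf_L2[OF Y] integrable_cross_L2[OF X Y] by simp
qed

lemma cost_perturb:
  assumes kN: "k < N"
    and y: "y \<in> borel_measurable (F k)" "L2 y" and u: "u \<in> borel_measurable (F k)" "L2 u"
  shows "cost k y (\<lambda>\<omega>. \<Phi> k *v y \<omega> + u \<omega>) = cost k y (\<lambda>\<omega>. \<Phi> k *v y \<omega>) + 2 * cost_cross k y u + cost_quad k u"
proof -
  define c where "c l = (if l = k then \<integral>\<omega>. (R k k *v (\<Phi> k *v y \<omega>)) \<bullet> u \<omega> \<partial>M
           else \<integral>\<omega>. (Qcl k l *v Xcl k y l \<omega>) \<bullet> Ycl k u l \<omega> \<partial>M)" for l
  define q where "q l = (if l = k then \<integral>\<omega>. qf (R k k) (u \<omega>) \<partial>M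
           else \<integral>\<omega>. qf (Qcl k l) (Ycl k u l \<omega>) \<partial>M)" for l
  have "(\<Sum>l=k..<N. running_cost k y (\<lambda>\<omega>. \<Phi> k *v y \<omega> + u \<omega>) l)
      = (\<Sum>l=k..<N. running_cost k y (\<lambda>\<omega>. \<Phi> k *v y \<omega>) l + 2 * c l + q l)"
    unfolding c_def q_def by (rule sum.cong) (auto simp: running_cost_perturb[OF _ _ y u])
  also have "\<dots> = (\<Sum>l=k..<N. running_cost k y (\<lambda>\<omega>. \<Phi> k *v y \<omega>) l) + 2 * (\<Sum>l=k..<N. c l)
      + (\<Sum>l=k..<N. q l)"
    by (simp add: sum.distrib sum_distrib_left)
  moreover have "(\<Sum>l=k..<N. c l) = (\<integral>\<omega>. (R k k *v (\<Phi> k *v y \<omega>)) \<bullet> u \<omega> \<partial>M)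
      + (\<Sum>l=Suc k..<N. \<integral>\<omega>. (Qcl k l *v Xcl k y l \<omega>) \<bullet> Ycl k u l \<omega> \<partial>M)"
    using kN by (simp add: c_def sum.atLeast_Suc_lessThan)
  moreover have "(\<Sum>l=k..<N. q l)
      = (\<integral>\<omega>. qf (R k k) (u \<omega>) \<partial>M) + (\<Sum>l=k..<N. \<integral>\<omega>. qf (Qcl k l) (Ycl k u l \<omega>) \<partial>M)"
    using kN by (simp add: q_def sum.atLeast_Suc_lessThan cl_state_le)
  ultimately show ?thesis
    unfolding cost_eq cost_cross_def cost_quad_def terminal_cost_perturb[OF kN y u]
    by (simp add: algebra_simps)
qed

section \<open>The adjoint equation\<close>

(* The ansatz Z_l = P_l X_l turns the backward equation into this recursion for P, because
   E[X_(l+1) | F_(l-1)] = Acl X_l and E[w_l X_(l+1) | F_(l-1)] = Ccl X_l. *)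
function lyap :: "nat \<Rightarrow> nat \<Rightarrow> real^'n^'n" where
  "lyap k l = (if l < N
     then transpose (Acl k l) ** lyap k (Suc l) ** Acl k l
       + transpose (Ccl k l) ** lyap k (Suc l) ** Ccl k l + Qcl k l
     else G k)"
  by auto
termination by (relation "Wellfounded.measure (\<lambda>(k, l). N - l)") auto

declare lyap.simps[simp del]

definition Zadj :: "nat \<Rightarrow> ('w \<Rightarrow> real^'n) \<Rightarrow> nat \<Rightarrow> 'w \<Rightarrow> real^'n" where
  "Zadj k y l = (\<lambda>\<omega>. lyap k l *v Xcl k y l \<omega>)"

lemma vcond_exp_Zadj:
  assumes "k \<le> l" and y: "y \<in> borel_measurable (F k)" "L2 y"
  shows "AE \<omega> in M. vcond_exp M (F l) (Zadj k y (Suc l)) \<omega> = lyap k (Suc l) *v (Acl k l *v Xcl k y l \<omega>)"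
    and "AE \<omega> in M. vcond_exp M (F l) (\<lambda>\<eta>. w l \<eta> *\<^sub>R Zadj k y (Suc l) \<eta>) \<omega>
      = lyap k (Suc l) *v (Ccl k l *v Xcl k y l \<omega>)"
proof -
  let ?a = "\<lambda>\<omega>. lyap k (Suc l) *v (Acl k l *v Xcl k y l \<omega>)"
  let ?b = "\<lambda>\<omega>. lyap k (Suc l) *v (Ccl k l *v Xcl k y l \<omega>)"
  have "Xcl k y l \<in> borel_measurable (F l)" "L2 (Xcl k y l)" using Xcl_adapted[OF y \<open>k \<le> l\<close>] by auto
  then have a: "?a \<in> borel_measurable (F l)" "L2 ?a" and b: "?b \<in> borel_measurable (F l)" "L2 ?b"
    by (auto intro!: L2_matrix_vector_mult)
  have "Zadj k y (Suc l) = (\<lambda>\<eta>. ?a \<eta> + w l \<eta> *\<^sub>R ?b \<eta>)"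
    unfolding Zadj_def Xcl_Suc[OF \<open>k \<le> l\<close>]
    by (simp only: matrix_vector_right_distrib matrix_vector_mult_scaleR)
  then show "AE \<omega> in M. vcond_exp M (F l) (Zadj k y (Suc l)) \<omega> = ?a \<omega>"
    and "AE \<omega> in M. vcond_exp M (F l) (\<lambda>\<eta>. w l \<eta> *\<^sub>R Zadj k y (Suc l) \<eta>) \<omega> = ?b \<omega>"
    using vcond_exp_noise_step[OF a b] by simp_all
qed

lemma fbsde_sol_Zadj:
  assumes y: "y \<in> borel_measurable (F k)" "L2 y"
  shows "fbsde_sol M x0 w N A B C D Q R G \<Phi> k y (Xcl k y) (Zadj k y)"
  unfolding fbsde_sol_def
proof (intro conjI ballI)
  fix l assume "l \<in> {k..N}"
  then have "L2 (Xcl k y l)" "L2 (Zadj k y l)"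
    using Xcl_adapted[OF y] unfolding Zadj_def by (auto intro: L2_matrix_vector_mult)
  then show "Xcl k y l \<in> borel_measurable M" "Zadj k y l \<in> borel_measurable M"
    "integrable M (\<lambda>\<omega>. (norm (Xcl k y l \<omega>))\<^sup>2)" "integrable M (\<lambda>\<omega>. (norm (Zadj k y l \<omega>))\<^sup>2)"
    unfolding L2_def by auto
next
  fix l assume "l \<in> {k..<N}"
  then have "k \<le> l" "l < N" by auto
  show "AE \<omega> in M. Xcl k y (Suc l) \<omega> =
      (A k l + B k l ** \<Phi> l) *v Xcl k y l \<omega> + w l \<omega> *\<^sub>R ((C k l + D k l ** \<Phi> l) *v Xcl k y l \<omega>)"
    by (intro AE_I2) (simp only: Xcl_Suc[OF \<open>k \<le> l\<close>] Acl_def Ccl_def)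
  show "AE \<omega> in M. Zadj k y l \<omega> =
      transpose (A k l + B k l ** \<Phi> l) *v vcond_exp M (Fp M x0 w l) (Zadj k y (Suc l)) \<omega>
      + transpose (C k l + D k l ** \<Phi> l) *v vcond_exp M (Fp M x0 w l) (\<lambda>\<eta>. w l \<eta> *\<^sub>R Zadj k y (Suc l) \<eta>) \<omega>
      + (transpose (\<Phi> l) ** R k l ** \<Phi> l + Q k l) *v Xcl k y l \<omega>"
    using vcond_exp_Zadj[OF \<open>k \<le> l\<close> y]
  proof eventually_elim
    case (elim \<omega>)
    have "Zadj k y l \<omega> = lyap k l *v Xcl k y l \<omega>" by (simp only: Zadj_def)
    then show ?case
      unfolding Acl_def[symmetric] Ccl_def[symmetric] elim lyap.simps[of k l] Qcl_def
      using \<open>l < N\<close>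
      by (simp add: matrix_vector_mul_assoc matrix_mul_assoc algebra_simps del: transpose_matrix_vector)
  qed
qed (simp_all add: cl_state_le Zadj_def lyap.simps[of k N])

lemma fbsde_solD:
  assumes "fbsde_sol M x0 w N A B C D Q R G \<Phi> k y X Z"
  shows "\<And>l. l \<in> {k..N} \<Longrightarrow> L2 (X l) \<and> L2 (Z l)"
    and "AE \<omega> in M. X k \<omega> = y \<omega>"
    and "\<And>l. l \<in> {k..<N} \<Longrightarrow> AE \<omega> in M. X (Suc l) \<omega> = Acl k l *v X l \<omega> + w l \<omega> *\<^sub>R (Ccl k l *v X l \<omega>)"
    and "\<And>l. l \<in> {k..<N} \<Longrightarrow> AE \<omega> in M. Z l \<omega> =
          transpose (Acl k l) *v vcond_exp M (F l) (Z (Suc l)) \<omega>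
          + transpose (Ccl k l) *v vcond_exp M (F l) (\<lambda>\<eta>. w l \<eta> *\<^sub>R Z (Suc l) \<eta>) \<omega>
          + Qcl k l *v X l \<omega>"
    and "AE \<omega> in M. Z N \<omega> = G k *v X N \<omega>"
  using assms unfolding fbsde_sol_def L2_def Acl_def Ccl_def Qcl_def by (simp_all add: add.commute)

lemma fbsde_sol_state_AE:
  assumes sol: "fbsde_sol M x0 w N A B C D Q R G \<Phi> k y X Z" and "l \<in> {k..N}"
  shows "AE \<omega> in M. X l \<omega> = Xcl k y l \<omega>"
proof -
  have "k + d \<le> N \<Longrightarrow> AE \<omega> in M. X (k + d) \<omega> = Xcl k y (k + d) \<omega>" for d
  proof (induction d)
    case 0
    then show ?case using fbsde_solD(2)[OF sol] by (simp add: cl_state_le)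
  next
    case (Suc d)
    then have "AE \<omega> in M. X (k + d) \<omega> = Xcl k y (k + d) \<omega>" by simp
    moreover have "AE \<omega> in M. X (Suc (k + d)) \<omega>
        = Acl k (k + d) *v X (k + d) \<omega> + w (k + d) \<omega> *\<^sub>R (Ccl k (k + d) *v X (k + d) \<omega>)"
      using fbsde_solD(3)[OF sol, of "k + d"] Suc.prems by simp
    ultimately show ?case by eventually_elim (simp only: add_Suc_right Xcl_Suc[OF le_add1])
  qed
  moreover obtain d where "l = k + d" "k + d \<le> N"
    using \<open>l \<in> {k..N}\<close> by (metis atLeastAtMost_iff le_add_diff_inverse)
  ultimately show ?thesis by simp
qed

definition stationarity :: "nat \<Rightarrow> ('w \<Rightarrow> real^'n) \<Rightarrow> (nat \<Rightarrow> 'w \<Rightarrow> real^'n) \<Rightarrow> 'w \<Rightarrow> real^'m" where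
  "stationarity k y Z \<omega> = R k k *v (\<Phi> k *v y \<omega>)
     + transpose (B k k) *v vcond_exp M (F k) (Z (Suc k)) \<omega>
     + transpose (D k k) *v vcond_exp M (F k) (\<lambda>\<eta>. w k \<eta> *\<^sub>R Z (Suc k) \<eta>) \<omega>"

lemma integral_inner_adjoint_step:
  assumes sol: "fbsde_sol M x0 w N A B C D Q R G \<Phi> k y X Z" and l: "k < l" "l < N"
    and y: "y \<in> borel_measurable (F k)" "L2 y" and u: "u \<in> borel_measurable (F k)" "L2 u"
  shows "(\<integral>\<omega>. Z (Suc l) \<omega> \<bullet> Ycl k u (Suc l) \<omega> \<partial>M)
    = (\<integral>\<omega>. Z l \<omega> \<bullet> Ycl k u l \<omega> \<partial>M) - (\<integral>\<omega>. (Qcl k l *v Xcl k y l \<omega>) \<bullet> Ycl k u l \<omega> \<partial>M)"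
proof -
  have Y: "Ycl k u l \<in> borel_measurable (F l)" "L2 (Ycl k u l)" using Ycl_adapted[OF u] l by auto
  then have AY: "(\<lambda>\<omega>. Acl k l *v Ycl k u l \<omega>) \<in> borel_measurable (F l)" "L2 (\<lambda>\<omega>. Acl k l *v Ycl k u l \<omega>)"
    and CY: "(\<lambda>\<omega>. Ccl k l *v Ycl k u l \<omega>) \<in> borel_measurable (F l)" "L2 (\<lambda>\<omega>. Ccl k l *v Ycl k u l \<omega>)"
    by (auto intro: L2_matrix_vector_mult)
  have Z: "L2 (Z (Suc l))" "L2 (Z l)" and X: "L2 (Xcl k y l)"
    using fbsde_solD(1)[OF sol] Xcl_adapted[OF y] l by auto
  have [measurable]: "Ycl k u l \<in> borel_measurable M" "Z l \<in> borel_measurable M"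
    "Xcl k y l \<in> borel_measurable M" using Y Z X by auto
  let ?V1 = "vcond_exp M (F l) (Z (Suc l))"
  let ?V2 = "vcond_exp M (F l) (\<lambda>\<eta>. w l \<eta> *\<^sub>R Z (Suc l) \<eta>)"
  have "(\<integral>\<omega>. Z (Suc l) \<omega> \<bullet> Ycl k u (Suc l) \<omega> \<partial>M)
      = (\<integral>\<omega>. Z (Suc l) \<omega> \<bullet> (Acl k l *v Ycl k u l \<omega> + w l \<omega> *\<^sub>R (Ccl k l *v Ycl k u l \<omega>)) \<partial>M)"
    using l by (simp add: Acl_def Ccl_def)
  also have "\<dots> = (\<integral>\<omega>. ?V1 \<omega> \<bullet> (Acl k l *v Ycl k u l \<omega>) + ?V2 \<omega> \<bullet> (Ccl k l *v Ycl k u l \<omega>) \<partial>M)"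
    by (rule integral_inner_noise_step(2)[OF AY CY Z(1)])
  also have "\<dots> = (\<integral>\<omega>. (transpose (Acl k l) *v ?V1 \<omega> + transpose (Ccl k l) *v ?V2 \<omega>) \<bullet> Ycl k u l \<omega> \<partial>M)"
    by (simp add: inner_matrix_vector_mult inner_add_left del: transpose_matrix_vector)
  also have "\<dots> = (\<integral>\<omega>. (Z l \<omega> - Qcl k l *v Xcl k y l \<omega>) \<bullet> Ycl k u l \<omega> \<partial>M)"
  proof (rule integral_cong_AE)
    show "AE \<omega> in M. (transpose (Acl k l) *v ?V1 \<omega> + transpose (Ccl k l) *v ?V2 \<omega>) \<bullet> Ycl k u l \<omega>
        = (Z l \<omega> - Qcl k l *v Xcl k y l \<omega>) \<bullet> Ycl k u l \<omega>"
    proof -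
      have "l \<in> {k..<N}" "l \<in> {k..N}" using l by auto
      from fbsde_solD(4)[OF sol this(1)] fbsde_sol_state_AE[OF sol this(2)] show ?thesis
        by eventually_elim (simp add: inner_diff_left del: transpose_matrix_vector)
    qed
  qed measurable
  also have "\<dots> = (\<integral>\<omega>. Z l \<omega> \<bullet> Ycl k u l \<omega> \<partial>M) - (\<integral>\<omega>. (Qcl k l *v Xcl k y l \<omega>) \<bullet> Ycl k u l \<omega> \<partial>M)"
    unfolding inner_diff_left using integrable_inner_L2[OF Z(2) Y(2)] integrable_cross_L2[OF X Y(2)] by simp
  finally show ?thesis .
qed

lemma integral_inner_adjoint_terminal:
  assumes sol: "fbsde_sol M x0 w N A B C D Q R G \<Phi> k y X Z" and "k < N"
    and y: "y \<in> borel_measurable (F k)" "L2 y" and u: "u \<in> borel_measurable (F k)" "L2 u"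
  shows "(\<integral>\<omega>. Z N \<omega> \<bullet> Ycl k u N \<omega> \<partial>M) = (\<integral>\<omega>. (G k *v Xcl k y N \<omega>) \<bullet> Ycl k u N \<omega> \<partial>M)"
proof (rule integral_cong_AE)
  have "N \<in> {k..N}" using \<open>k < N\<close> by simp
  from fbsde_solD(5)[OF sol] fbsde_sol_state_AE[OF sol this]
  show "AE \<omega> in M. Z N \<omega> \<bullet> Ycl k u N \<omega> = (G k *v Xcl k y N \<omega>) \<bullet> Ycl k u N \<omega>"
    by eventually_elim simp
  have "L2 (Ycl k u N)" "L2 (Z N)" "L2 (Xcl k y N)"
    using Ycl_adapted[OF u] Xcl_adapted[OF y] fbsde_solD(1)[OF sol \<open>N \<in> {k..N}\<close>] \<open>k < N\<close> by auto
  note [measurable] = this[THEN L2_measurable]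
  show "(\<lambda>\<omega>. Z N \<omega> \<bullet> Ycl k u N \<omega>) \<in> borel_measurable M"
    and "(\<lambda>\<omega>. (G k *v Xcl k y N \<omega>) \<bullet> Ycl k u N \<omega>) \<in> borel_measurable M"
    by measurable
qed

lemma integral_inner_adjoint_first:
  assumes sol: "fbsde_sol M x0 w N A B C D Q R G \<Phi> k y X Z" and "k < N"
    and u: "u \<in> borel_measurable (F k)" "L2 u"
  defines "T \<equiv> \<lambda>\<omega>. transpose (B k k) *v vcond_exp M (F k) (Z (Suc k)) \<omega>
       + transpose (D k k) *v vcond_exp M (F k) (\<lambda>\<eta>. w k \<eta> *\<^sub>R Z (Suc k) \<eta>) \<omega>"
  shows "integrable M (\<lambda>\<omega>. u \<omega> \<bullet> T \<omega>)"
    and "(\<integral>\<omega>. Z (Suc k) \<omega> \<bullet> Ycl k u (Suc k) \<omega> \<partial>M) = (\<integral>\<omega>. u \<omega> \<bullet> T \<omega> \<partial>M)"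
proof -
  have Bu: "(\<lambda>\<omega>. B k k *v u \<omega>) \<in> borel_measurable (F k)" "L2 (\<lambda>\<omega>. B k k *v u \<omega>)"
    and Du: "(\<lambda>\<omega>. D k k *v u \<omega>) \<in> borel_measurable (F k)" "L2 (\<lambda>\<omega>. D k k *v u \<omega>)"
    using u by (auto intro: L2_matrix_vector_mult)
  have Z: "L2 (Z (Suc k))" using fbsde_solD(1)[OF sol] \<open>k < N\<close> by auto
  have T: "u \<omega> \<bullet> T \<omega> = vcond_exp M (F k) (Z (Suc k)) \<omega> \<bullet> (B k k *v u \<omega>)
      + vcond_exp M (F k) (\<lambda>\<eta>. w k \<eta> *\<^sub>R Z (Suc k) \<eta>) \<omega> \<bullet> (D k k *v u \<omega>)" for \<omega>
    unfolding T_def by (simp add: inner_matrix_vector_mult inner_add_right inner_commute del: transpose_matrix_vector)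
  show "integrable M (\<lambda>\<omega>. u \<omega> \<bullet> T \<omega>)"
    unfolding T using integral_inner_noise_step(1)[OF Bu Du Z] .
  have "(\<integral>\<omega>. Z (Suc k) \<omega> \<bullet> Ycl k u (Suc k) \<omega> \<partial>M)
      = (\<integral>\<omega>. Z (Suc k) \<omega> \<bullet> (B k k *v u \<omega> + w k \<omega> *\<^sub>R (D k k *v u \<omega>)) \<partial>M)"
    by (simp add: cl_state_Suc_self)
  also have "\<dots> = (\<integral>\<omega>. u \<omega> \<bullet> T \<omega> \<partial>M)"
    unfolding T by (rule integral_inner_noise_step(2)[OF Bu Du Z])
  finally show "(\<integral>\<omega>. Z (Suc k) \<omega> \<bullet> Ycl k u (Suc k) \<omega> \<partial>M) = (\<integral>\<omega>. u \<omega> \<bullet> T \<omega> \<partial>M)" .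
qed

lemma cost_cross_eq_stationarity:
  assumes sol: "fbsde_sol M x0 w N A B C D Q R G \<Phi> k y X Z" and kN: "k < N"
    and y: "y \<in> borel_measurable (F k)" "L2 y" and u: "u \<in> borel_measurable (F k)" "L2 u"
  shows "cost_cross k y u = (\<integral>\<omega>. u \<omega> \<bullet> stationarity k y Z \<omega> \<partial>M)"
proof -
  define a where "a l = (\<integral>\<omega>. Z l \<omega> \<bullet> Ycl k u l \<omega> \<partial>M)" for l
  have "(\<Sum>l=Suc k..<N. \<integral>\<omega>. (Qcl k l *v Xcl k y l \<omega>) \<bullet> Ycl k u l \<omega> \<partial>M) = (\<Sum>l=Suc k..<N. a l - a (Suc l))"
  proof (rule sum.cong)
    fix l assume "l \<in> {Suc k..<N}"
    then show "(\<integral>\<omega>. (Qcl k l *v Xcl k y l \<omega>) \<bullet> Ycl k u l \<omega> \<partial>M) = a l - a (Suc l)"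
      unfolding a_def using integral_inner_adjoint_step[OF sol _ _ y u, of l] by simp
  qed simp
  also have "\<dots> = a (Suc k) - a N"
    using sum_Suc_diff'[of "Suc k" N "\<lambda>l. - a l"] kN by simp
  finally have telescope: "(\<Sum>l=Suc k..<N. \<integral>\<omega>. (Qcl k l *v Xcl k y l \<omega>) \<bullet> Ycl k u l \<omega> \<partial>M)
      + (\<integral>\<omega>. (G k *v Xcl k y N \<omega>) \<bullet> Ycl k u N \<omega> \<partial>M) = a (Suc k)"
    unfolding a_def integral_inner_adjoint_terminal[OF sol kN y u] by simp
  have "integrable M (\<lambda>\<omega>. u \<omega> \<bullet> (R k k *v (\<Phi> k *v y \<omega>)))"
    using integrable_inner_L2[OF u(2) L2_matrix_vector_mult[OF L2_matrix_vector_mult[OF y(2)]]] .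
  then show ?thesis
    unfolding cost_cross_def add.assoc telescope a_def integral_inner_adjoint_first(2)[OF sol kN u]
      stationarity_def
    using integral_inner_adjoint_first(1)[OF sol kN u]
    by (simp add: inner_add_right inner_commute add.assoc)
qed

section \<open>Equilibrium strategies\<close>

definition stationarity_gain :: "nat \<Rightarrow> real^'n^'m" where
  "stationarity_gain k = R k k ** \<Phi> k + transpose (B k k) ** lyap k (Suc k) ** Acl k k
     + transpose (D k k) ** lyap k (Suc k) ** Ccl k k"

lemma stationarity_measurable:
  "y \<in> borel_measurable M \<Longrightarrow> stationarity k y Z \<in> borel_measurable M"
  unfolding stationarity_def
  by (intro borel_measurable_add measurable_compose[OF _ borel_measurable_matrix_vector_mult]
      vcond_exp_measurable)

lemma stationarity_Zadj:
  assumes y: "y \<in> borel_measurable (F k)" "L2 y"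
  shows "AE \<omega> in M. stationarity k y (Zadj k y) \<omega> = stationarity_gain k *v y \<omega>"
  using vcond_exp_Zadj[OF order_refl y]
  by eventually_elim
     (simp add: stationarity_def stationarity_gain_def cl_state_le matrix_vector_mult_add_rdistrib
        matrix_vector_mul_assoc matrix_mul_assoc del: transpose_matrix_vector)

lemma cost_cross_Zadj:
  assumes "k < N" and y: "y \<in> borel_measurable (F k)" "L2 y" and u: "u \<in> borel_measurable (F k)" "L2 u"
  shows "cost_cross k y u = (\<integral>\<omega>. u \<omega> \<bullet> (stationarity_gain k *v y \<omega>) \<partial>M)"
proof -
  have [measurable]: "u \<in> borel_measurable M" "y \<in> borel_measurable M" using u y by auto
  have [measurable]: "stationarity k y (Zadj k y) \<in> borel_measurable M"
    by (rule stationarity_measurable) simp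
  have "cost_cross k y u = (\<integral>\<omega>. u \<omega> \<bullet> stationarity k y (Zadj k y) \<omega> \<partial>M)"
    using cost_cross_eq_stationarity[OF fbsde_sol_Zadj[OF y] \<open>k < N\<close> y u] .
  also have "\<dots> = (\<integral>\<omega>. u \<omega> \<bullet> (stationarity_gain k *v y \<omega>) \<partial>M)"
    by (rule integral_cong_AE) (use stationarity_Zadj[OF y] in \<open>measurable, auto\<close>)
  finally show ?thesis .
qed

lemma stationarity_gain_vanishes_if_minimal:
  assumes "k < N" and y: "y \<in> borel_measurable (F k)" "L2 y"
    and min: "\<And>u. u \<in> borel_measurable (F k) \<Longrightarrow> L2 u \<Longrightarrow> 0 \<le> 2 * cost_cross k y u + cost_quad k u"
  shows "AE \<omega> in M. stationarity_gain k *v y \<omega> = 0"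
proof -
  define S where "S = (\<lambda>\<omega>. stationarity_gain k *v y \<omega>)"
  have S: "S \<in> borel_measurable (F k)" "L2 S" unfolding S_def using y by (auto intro: L2_matrix_vector_mult)
  have "(\<integral>\<omega>. S \<omega> \<bullet> S \<omega> \<partial>M) = 0"
  proof (rule nonneg_eq_0_if_linear_le_quadratic)
    show "0 \<le> (\<integral>\<omega>. S \<omega> \<bullet> S \<omega> \<partial>M)" by (rule integral_nonneg_AE) simp
    fix t :: real assume "0 < t"
    have u: "(\<lambda>\<omega>. (- t) *\<^sub>R S \<omega>) \<in> borel_measurable (F k)" "L2 (\<lambda>\<omega>. (- t) *\<^sub>R S \<omega>)"
      using S(1) L2_scaleR[OF S(2)] by measurable
    have "cost_cross k y (\<lambda>\<omega>. (- t) *\<^sub>R S \<omega>) = - t * (\<integral>\<omega>. S \<omega> \<bullet> S \<omega> \<partial>M)"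
      unfolding cost_cross_Zadj[OF \<open>k < N\<close> y u] by (simp add: S_def)
    then show "2 * t * (\<integral>\<omega>. S \<omega> \<bullet> S \<omega> \<partial>M) \<le> t\<^sup>2 * cost_quad k S"
      using min[OF u] cost_quad_scaleR[of k "- t" S] by simp
  qed
  then have "AE \<omega> in M. S \<omega> \<bullet> S \<omega> = 0"
    by (subst (asm) integral_nonneg_eq_0_iff_AE) (auto intro: integrable_inner_L2 S)
  then show ?thesis unfolding S_def by eventually_elim simp
qed

lemma cost_perturb_nonneg_if_minimal:
  assumes "k < N" and y: "y \<in> borel_measurable (F k)" "L2 y"
    and min: "\<forall>v. L2F M x0 w k v \<longrightarrow> cost k y (\<lambda>\<omega>. \<Phi> k *v y \<omega>) \<le> cost k y v"
    and u: "u \<in> borel_measurable (F k)" "L2 u"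
  shows "0 \<le> 2 * cost_cross k y u + cost_quad k u"
proof -
  have "L2F M x0 w k (\<lambda>\<omega>. \<Phi> k *v y \<omega> + u \<omega>)"
    unfolding L2F_iff_L2 using u y by (auto intro: L2_add L2_matrix_vector_mult)
  with min have "cost k y (\<lambda>\<omega>. \<Phi> k *v y \<omega>) \<le> cost k y (\<lambda>\<omega>. \<Phi> k *v y \<omega> + u \<omega>)" by blast
  then show ?thesis unfolding cost_perturb[OF \<open>k < N\<close> y u] by simp
qed

lemma stationary_convex_if_cost_minimal:
  assumes "k < N" and y: "y \<in> borel_measurable (F k)" "L2 y"
    and min: "\<forall>v. L2F M x0 w k v \<longrightarrow> cost k y (\<lambda>\<omega>. \<Phi> k *v y \<omega>) \<le> cost k y v"
  shows "\<exists>X Z. fbsde_sol M x0 w N A B C D Q R G \<Phi> k y X Z \<and> (AE \<omega> in M. 0 = stationarity k (X k) Z \<omega>)"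
    and "\<forall>u. L2F M x0 w k u \<longrightarrow> 0 \<le> cost_quad k u"
proof -
  note perturb = cost_perturb_nonneg_if_minimal[OF \<open>k < N\<close> y min]
  have gain0: "AE \<omega> in M. stationarity_gain k *v y \<omega> = 0"
    by (rule stationarity_gain_vanishes_if_minimal[OF \<open>k < N\<close> y perturb])
  have "AE \<omega> in M. 0 = stationarity k (Xcl k y k) (Zadj k y) \<omega>"
    using stationarity_Zadj[OF y] gain0 by eventually_elim (simp add: cl_state_le)
  with fbsde_sol_Zadj[OF y]
  show "\<exists>X Z. fbsde_sol M x0 w N A B C D Q R G \<Phi> k y X Z \<and> (AE \<omega> in M. 0 = stationarity k (X k) Z \<omega>)"
    by blast
  show "\<forall>u. L2F M x0 w k u \<longrightarrow> 0 \<le> cost_quad k u"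
  proof (intro allI impI)
    fix u :: "'w \<Rightarrow> real^'m" assume "L2F M x0 w k u"
    then have u: "u \<in> borel_measurable (F k)" "L2 u" by (simp_all add: L2F_iff_L2)
    have "cost_cross k y u = 0"
      unfolding cost_cross_Zadj[OF \<open>k < N\<close> y u]
      by (rule integral_inner_eq_0_if_AE_0[OF _ _ gain0]) (use u y in auto)
    then show "0 \<le> cost_quad k u" using perturb[OF u] by simp
  qed
qed

lemma cost_minimal_if_stationary_convex:
  assumes "k < N" and y: "y \<in> borel_measurable (F k)" "L2 y"
    and sol: "fbsde_sol M x0 w N A B C D Q R G \<Phi> k y X Z"
    and stat: "AE \<omega> in M. 0 = stationarity k (X k) Z \<omega>"
    and convex: "\<forall>u. L2F M x0 w k u \<longrightarrow> 0 \<le> cost_quad k u"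
    and v: "L2F M x0 w k v"
  shows "cost k y (\<lambda>\<omega>. \<Phi> k *v y \<omega>) \<le> cost k y v"
proof -
  define u where "u = (\<lambda>\<omega>. v \<omega> - \<Phi> k *v y \<omega>)"
  have u: "u \<in> borel_measurable (F k)" "L2 u"
    using v y unfolding u_def L2F_iff_L2 by (auto intro: L2_diff L2_matrix_vector_mult)
  have "AE \<omega> in M. stationarity k y Z \<omega> = 0"
    using stat fbsde_solD(2)[OF sol] by eventually_elim (simp add: stationarity_def)
  then have "cost_cross k y u = 0"
    unfolding cost_cross_eq_stationarity[OF sol \<open>k < N\<close> y u]
    by (rule integral_inner_eq_0_if_AE_0[rotated 2]) (use u y in \<open>auto intro: stationarity_measurable\<close>)
  moreover have "0 \<le> cost_quad k u" using convex u by (simp add: L2F_iff_L2)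
  moreover have "v = (\<lambda>\<omega>. \<Phi> k *v y \<omega> + u \<omega>)" unfolding u_def by simp
  ultimately show ?thesis using cost_perturb[OF \<open>k < N\<close> y u] by simp
qed

lemma cost_minimal_iff_stationary_convex:
  assumes "k < N" and "y \<in> borel_measurable (F k)" "L2 y"
  shows "(\<forall>v. L2F M x0 w k v \<longrightarrow> cost k y (\<lambda>\<omega>. \<Phi> k *v y \<omega>) \<le> cost k y v) \<longleftrightarrow>
    (\<exists>X Z. fbsde_sol M x0 w N A B C D Q R G \<Phi> k y X Z
        \<and> (AE \<omega> in M. 0 = stationarity k (X k) Z \<omega>))
    \<and> (\<forall>u. L2F M x0 w k u \<longrightarrow> 0 \<le> cost_quad k u)"
  using stationary_convex_if_cost_minimal[OF assms] cost_minimal_if_stationary_convex[OF assms]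
  by blast

lemma is_lfes_iff_cond_ii: "is_lfes M x0 w N A B C D Q R G \<Phi> \<longleftrightarrow> cond_ii M x0 w N A B C D Q R G \<Phi>"
proof -
  have pointwise: "(\<forall>v. L2F M x0 w k v \<longrightarrow> cost k y (\<lambda>\<omega>. \<Phi> k *v y \<omega>) \<le> cost k y v) \<longleftrightarrow>
    (\<exists>X Z. fbsde_sol M x0 w N A B C D Q R G \<Phi> k y X Z
        \<and> (AE \<omega> in M. 0 = R k k *v (\<Phi> k *v X k \<omega>)
              + transpose (B k k) *v vcond_exp M (F k) (Z (Suc k)) \<omega>
              + transpose (D k k) *v vcond_exp M (F k) (\<lambda>\<eta>. w k \<eta> *\<^sub>R Z (Suc k) \<eta>) \<omega>))
    \<and> (INF u \<in> {u. L2F M x0 w k u}. ereal (cost_quad k u)) \<ge> 0"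
    if "k < N" and "y = eq_state A B C D w \<Phi> t x k" for t k x y
  proof -
    have "y \<in> borel_measurable (F k)" "L2 y" using eq_state_adapted that(2) by auto
    from cost_minimal_iff_stationary_convex[OF \<open>k < N\<close> this] show ?thesis
      by (simp only: stationarity_def INF_ereal_nonneg_iff)
  qed
  show ?thesis
    unfolding is_lfes_def cond_ii_def Let_def cost_def[symmetric] Qcl_def[symmetric]
      cost_quad_def[symmetric]
    by (intro all_cong1 imp_cong[OF refl] ball_cong[OF refl] pointwise[OF _ refl]) auto
qed

end

theorem theorem3p1:
  fixes M :: "'w measure" and x0 :: "'w \<Rightarrow> real^'n" and w :: "nat \<Rightarrow> 'w \<Rightarrow> real"
    and N :: nat
    and A C Q :: "nat \<Rightarrow> nat \<Rightarrow> real^'n^'n" and B D :: "nat \<Rightarrow> nat \<Rightarrow> real^'m^'n"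
    and R :: "nat \<Rightarrow> nat \<Rightarrow> real^'m^'m" and G :: "nat \<Rightarrow> real^'n^'n"
  assumes "prob_space M"
    and "0 < N"
    and "x0 \<in> borel_measurable M"
    and "\<And>k. w k \<in> borel_measurable M"
    and "\<And>k. integrable M (\<lambda>\<omega>. (w k \<omega>)\<^sup>2)"
    and "\<And>k. AE \<omega> in M. real_cond_exp M (Fp M x0 w k) (w k) \<omega> = 0"
    and "\<And>k. AE \<omega> in M. real_cond_exp M (Fp M x0 w k) (\<lambda>\<eta>. (w k \<eta>)\<^sup>2) \<omega> = 1"
    and "\<And>t k. t < N \<Longrightarrow> t \<le> k \<Longrightarrow> k < N \<Longrightarrow> transpose (Q t k) = Q t k"
    and "\<And>t k. t < N \<Longrightarrow> t \<le> k \<Longrightarrow> k < N \<Longrightarrow> transpose (R t k) = R t k"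
    and "\<And>t. t < N \<Longrightarrow> transpose (G t) = G t"
  shows "(\<exists>\<Phi>. is_lfes M x0 w N A B C D Q R G \<Phi>) \<longleftrightarrow> (\<exists>\<Phi>. cond_ii M x0 w N A B C D Q R G \<Phi>)"
proof -
  have "is_lfes M x0 w N A B C D Q R G \<Phi> \<longleftrightarrow> cond_ii M x0 w N A B C D Q R G \<Phi>"
    for \<Phi> :: "nat \<Rightarrow> real^'n^'m"
  proof -
    interpret lq_feedback M x0 w N A B C D Q R G \<Phi>
      by (intro lq_feedback.intro noise_filtration.intro noise_filtration_axioms.intro
          lq_feedback_axioms.intro) (use assms in auto)
    show ?thesis by (rule is_lfes_iff_cond_ii)
  qed
  then show ?thesis by blast
qed

end
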